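(* Let $X$ be any simplicial set and let $\widetilde X$ be defined by the pushout square \[ \begin{array}{ccc}(\Delta^1)^{\sqcup X_1}&\to&J^{\sqcup X_1}\\ \downarrow&&\downarrow\\ X&\xrightarrow{i}&\widetilde X.\end{array} \] Then the homotopy category of $\widetilde X$ is a groupoid and the natural inclusion $i\colon X\hookrightarrow\widetilde X$ is an acyclic cofibration. In particular, the induced map $|i|\colon|X|\to|\widetilde X|$ on geometric realizations is a homotopy equivalence.
   Context: $J$ is the nerve of the groupoid $\mathcal J$ with two objects $j_0,j_1$ and exactly two non-identity morphisms $e\colon j_0\to j_1$ and $e^{-1}\colon j_1\to j_0$; $\Delta^1\hookrightarrow J$ is the inclusion of the $1$-simplex $e$. In the pushout, $(\Delta^1)^{\sqcup X_1}$ and $J^{\sqcup X_1}$ denote disjoint unions of copies indexed by the set $X_1$ of $1$-simplices of $X$, the left vertical map sends the copy of $\Delta^1$ indexed by $\sigma$ to $\sigma$, and the top map is the disjoint union of the inclusions $\Delta^1\hookrightarrow J$. Acyclic cofibrations refer to the Kan–Quillen model structure on simplicial sets (monomorphisms that are weak homotopy equivalences). The homotopy category of a simplicial set is the category freely generated by its $1$-simplices modulo relations from $2$-simplices. *)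

theory Defs
  imports "HOL-Analysis.Analysis"
begin

text \<open>A morphism [m] -> [n] of the simplex category is a monotone map
  {0..m} -> {0..n}, represented by a function nat => nat (only its values on
  {0..m} matter).\<close>

definition dmor :: "nat \<Rightarrow> nat \<Rightarrow> (nat \<Rightarrow> nat) \<Rightarrow> bool" where
  "dmor m n \<theta> \<longleftrightarrow> (\<forall>i\<le>m. \<theta> i \<le> n) \<and> (\<forall>i j. i \<le> j \<longrightarrow> j \<le> m \<longrightarrow> \<theta> i \<le> \<theta> j)"

text \<open>simp X n is the set of n-simplices; act X m n \<theta> x is \<theta>^* x for
  \<theta> : [m] -> [n] and x an n-simplex.\<close>

record 'a sset =
  simp :: "nat \<Rightarrow> 'a set"
  act  :: "nat \<Rightarrow> nat \<Rightarrow> (nat \<Rightarrow> nat) \<Rightarrow> 'a \<Rightarrow> 'a"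

definition is_sset :: "'a sset \<Rightarrow> bool" where
  "is_sset X \<longleftrightarrow>
     (\<forall>m n \<theta> x. dmor m n \<theta> \<longrightarrow> x \<in> simp X n \<longrightarrow> act X m n \<theta> x \<in> simp X m) \<and>
     (\<forall>n x. x \<in> simp X n \<longrightarrow> act X n n id x = x) \<and>
     (\<forall>m n p \<theta> \<phi> x. dmor m n \<theta> \<longrightarrow> dmor n p \<phi> \<longrightarrow> x \<in> simp X p \<longrightarrow>
        act X m n \<theta> (act X n p \<phi> x) = act X m p (\<phi> \<circ> \<theta>) x) \<and>
     (\<forall>m n \<theta> \<theta>' x. (\<forall>i\<le>m. \<theta> i = \<theta>' i) \<longrightarrow> act X m n \<theta> x = act X m n \<theta>' x)"

definition sset_map :: "'a sset \<Rightarrow> 'b sset \<Rightarrow> (nat \<Rightarrow> 'a \<Rightarrow> 'b) \<Rightarrow> bool" where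
  "sset_map X Y f \<longleftrightarrow>
     (\<forall>n x. x \<in> simp X n \<longrightarrow> f n x \<in> simp Y n) \<and>
     (\<forall>m n \<theta> x. dmor m n \<theta> \<longrightarrow> x \<in> simp X n \<longrightarrow> f m (act X m n \<theta> x) = act Y m n \<theta> (f n x))"

definition sset_mono :: "'a sset \<Rightarrow> 'b sset \<Rightarrow> (nat \<Rightarrow> 'a \<Rightarrow> 'b) \<Rightarrow> bool" where
  "sset_mono X Y f \<longleftrightarrow> sset_map X Y f \<and> (\<forall>n. inj_on (f n) (simp X n))"

definition equiv_closure_on :: "'a set \<Rightarrow> ('a \<times> 'a) set \<Rightarrow> ('a \<times> 'a) set" where
  "equiv_closure_on S R = (R \<union> R\<inverse>)\<^sup>* \<inter> (S \<times> S)"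

definition po_rel :: "'c sset \<Rightarrow> 'a sset \<Rightarrow> 'b sset \<Rightarrow> (nat \<Rightarrow> 'c \<Rightarrow> 'a) \<Rightarrow> (nat \<Rightarrow> 'c \<Rightarrow> 'b)
    \<Rightarrow> nat \<Rightarrow> (('a + 'b) \<times> ('a + 'b)) set" where
  "po_rel C A B f g n = equiv_closure_on (simp A n <+> simp B n)
      {(Inl (f n c), Inr (g n c)) | c. c \<in> simp C n}"

definition sum_act :: "'a sset \<Rightarrow> 'b sset \<Rightarrow> nat \<Rightarrow> nat \<Rightarrow> (nat \<Rightarrow> nat) \<Rightarrow> 'a + 'b \<Rightarrow> 'a + 'b" where
  "sum_act A B m n \<theta> z = (case z of Inl a \<Rightarrow> Inl (act A m n \<theta> a) | Inr b \<Rightarrow> Inr (act B m n \<theta> b))"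

definition sset_pushout :: "'c sset \<Rightarrow> 'a sset \<Rightarrow> 'b sset \<Rightarrow> (nat \<Rightarrow> 'c \<Rightarrow> 'a) \<Rightarrow> (nat \<Rightarrow> 'c \<Rightarrow> 'b)
    \<Rightarrow> ('a + 'b) set sset" where
  "sset_pushout C A B f g =
     \<lparr> simp = (\<lambda>n. (simp A n <+> simp B n) // po_rel C A B f g n),
       act = (\<lambda>m n \<theta> c. po_rel C A B f g m `` {sum_act A B m n \<theta> (SOME z. z \<in> c)}) \<rparr>"

definition po_inl :: "'c sset \<Rightarrow> 'a sset \<Rightarrow> 'b sset \<Rightarrow> (nat \<Rightarrow> 'c \<Rightarrow> 'a) \<Rightarrow> (nat \<Rightarrow> 'c \<Rightarrow> 'b)
    \<Rightarrow> nat \<Rightarrow> 'a \<Rightarrow> ('a + 'b) set" where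
  "po_inl C A B f g n a = po_rel C A B f g n `` {Inl a}"

text \<open>J = nerve of the groupoid with two objects j0 = 0, j1 = 1 and exactly one
  morphism between any two objects: an n-simplex is a sequence of objects
  (s 0, ..., s n) (normalised by s i = 0 for i > n).\<close>

definition J_sset :: "(nat \<Rightarrow> nat) sset" where
  "J_sset = \<lparr> simp = (\<lambda>n. {s. (\<forall>i\<le>n. s i \<le> 1) \<and> (\<forall>i>n. s i = 0)}),
              act = (\<lambda>m n \<theta> s. (\<lambda>i. if i \<le> m then s (\<theta> i) else 0)) \<rparr>"

text \<open>Delta^1: n-simplices are monotone maps [n] -> [1]; it sits inside J as the
  1-simplex e : j0 -> j1.\<close>

definition Delta1_sset :: "(nat \<Rightarrow> nat) sset" where
  "Delta1_sset = \<lparr> simp = (\<lambda>n. {s. dmor n 1 s \<and> (\<forall>i>n. s i = 0)}),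
                   act = (\<lambda>m n \<theta> s. (\<lambda>i. if i \<le> m then s (\<theta> i) else 0)) \<rparr>"

definition copr_sset :: "'i set \<Rightarrow> 'b sset \<Rightarrow> ('i \<times> 'b) sset" where
  "copr_sset I Y = \<lparr> simp = (\<lambda>n. I \<times> simp Y n),
                     act = (\<lambda>m n \<theta> p. (fst p, act Y m n \<theta> (snd p))) \<rparr>"

text \<open>The left vertical map: the copy of Delta^1 indexed by sigma goes to sigma
  (the Yoneda map: s : [n] -> [1] is sent to s^* sigma).\<close>

definition classify_map :: "'a sset \<Rightarrow> nat \<Rightarrow> 'a \<times> (nat \<Rightarrow> nat) \<Rightarrow> 'a" where
  "classify_map X n p = act X n 1 (snd p) (fst p)"

definition tildeX :: "'a sset \<Rightarrow> ('a + 'a \<times> (nat \<Rightarrow> nat)) set sset" where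
  "tildeX X = sset_pushout (copr_sset (simp X 1) Delta1_sset) X (copr_sset (simp X 1) J_sset)
                 (classify_map X) (\<lambda>n p. p)"

definition tilde_incl :: "'a sset \<Rightarrow> nat \<Rightarrow> 'a \<Rightarrow> ('a + 'a \<times> (nat \<Rightarrow> nat)) set" where
  "tilde_incl X = po_inl (copr_sset (simp X 1) Delta1_sset) X (copr_sset (simp X 1) J_sset)
                 (classify_map X) (\<lambda>n p. p)"

definition src1 :: "'a sset \<Rightarrow> 'a \<Rightarrow> 'a" where "src1 X e = act X 0 1 (\<lambda>_. 0) e"
definition tgt1 :: "'a sset \<Rightarrow> 'a \<Rightarrow> 'a" where "tgt1 X e = act X 0 1 (\<lambda>_. 1) e"
definition degen0 :: "'a sset \<Rightarrow> 'a \<Rightarrow> 'a" where "degen0 X x = act X 1 0 (\<lambda>_. 0) x"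

definition face2 :: "'a sset \<Rightarrow> nat \<Rightarrow> 'a \<Rightarrow> 'a" where
  "face2 X k t = act X 1 2 (\<lambda>j. if j < k then j else j + 1) t"
definition vert2 :: "'a sset \<Rightarrow> nat \<Rightarrow> 'a \<Rightarrow> 'a" where
  "vert2 X k t = act X 0 2 (\<lambda>_. k) t"

text \<open>Paths of composable 1-simplices (morphisms of the free category).\<close>

fun is_path :: "'a sset \<Rightarrow> 'a \<Rightarrow> 'a list \<Rightarrow> 'a \<Rightarrow> bool" where
  "is_path X x [] y \<longleftrightarrow> x = y \<and> x \<in> simp X 0"
| "is_path X x (e # p) y \<longleftrightarrow> e \<in> simp X 1 \<and> src1 X e = x \<and> x \<in> simp X 0 \<and> is_path X (tgt1 X e) p y"

text \<open>The congruence generated by the 2-simplex relations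
  d1 t = d0 t o d2 t and by degenerate 1-simplices being identities.\<close>

inductive hrel :: "'a sset \<Rightarrow> 'a \<Rightarrow> 'a \<Rightarrow> 'a list \<Rightarrow> 'a list \<Rightarrow> bool" for X where
  hrefl: "is_path X x p y \<Longrightarrow> hrel X x y p p"
| hsym: "hrel X x y p q \<Longrightarrow> hrel X x y q p"
| htrans: "hrel X x y p q \<Longrightarrow> hrel X x y q r \<Longrightarrow> hrel X x y p r"
| hcong: "hrel X x y p q \<Longrightarrow> is_path X w a x \<Longrightarrow> is_path X y b z \<Longrightarrow> hrel X w z (a @ p @ b) (a @ q @ b)"
| htri: "t \<in> simp X 2 \<Longrightarrow> hrel X (vert2 X 0 t) (vert2 X 2 t) [face2 X 1 t] [face2 X 2 t, face2 X 0 t]"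
| hdeg: "x \<in> simp X 0 \<Longrightarrow> hrel X x x [degen0 X x] []"

definition hocat_is_groupoid :: "'a sset \<Rightarrow> bool" where
  "hocat_is_groupoid X \<longleftrightarrow>
     (\<forall>x p y. is_path X x p y \<longrightarrow>
        (\<exists>q. is_path X y q x \<and> hrel X x x (p @ q) [] \<and> hrel X y y (q @ p) []))"

definition std_simplex :: "nat \<Rightarrow> (nat \<Rightarrow> real) set" where
  "std_simplex n = {t. (\<forall>i. 0 \<le> t i) \<and> (\<forall>i>n. t i = 0) \<and> sum t {..n} = 1}"

definition pre_points :: "'a sset \<Rightarrow> (nat \<times> 'a \<times> (nat \<Rightarrow> real)) set" where
  "pre_points X = {(n, x, t). x \<in> simp X n \<and> t \<in> std_simplex n}"

text \<open>Topology of the disjoint union of the X_n x Delta^n (X_n discrete).\<close>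

definition pre_top :: "'a sset \<Rightarrow> (nat \<times> 'a \<times> (nat \<Rightarrow> real)) topology" where
  "pre_top X = topology (\<lambda>U. U \<subseteq> pre_points X \<and>
      (\<forall>n x. x \<in> simp X n \<longrightarrow>
         openin (subtopology (powertop_real UNIV) (std_simplex n)) {t. (n, x, t) \<in> U}))"

definition simplex_push :: "nat \<Rightarrow> (nat \<Rightarrow> nat) \<Rightarrow> (nat \<Rightarrow> real) \<Rightarrow> (nat \<Rightarrow> real)" where
  "simplex_push m \<theta> t = (\<lambda>j. \<Sum>i\<in>{i. i \<le> m \<and> \<theta> i = j}. t i)"

definition real_rel :: "'a sset \<Rightarrow> ((nat \<times> 'a \<times> (nat \<Rightarrow> real)) \<times> (nat \<times> 'a \<times> (nat \<Rightarrow> real))) set" where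
  "real_rel X = equiv_closure_on (pre_points X)
     {((m, act X m n \<theta> x, t), (n, x, simplex_push m \<theta> t)) | m n \<theta> x t.
        dmor m n \<theta> \<and> x \<in> simp X n \<and> t \<in> std_simplex m}"

definition realization :: "'a sset \<Rightarrow> (nat \<times> 'a \<times> (nat \<Rightarrow> real)) set topology" where
  "realization X = topology (\<lambda>U. U \<subseteq> pre_points X // real_rel X \<and> openin (pre_top X) (\<Union>U))"

definition real_map :: "'a sset \<Rightarrow> 'b sset \<Rightarrow> (nat \<Rightarrow> 'a \<Rightarrow> 'b)
    \<Rightarrow> (nat \<times> 'a \<times> (nat \<Rightarrow> real)) set \<Rightarrow> (nat \<times> 'b \<times> (nat \<Rightarrow> real)) set" where
  "real_map X Y f c = (case (SOME p. p \<in> c) of (n, x, t) \<Rightarrow> real_rel Y `` {(n, f n x, t)})"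

definition sphere_base :: "nat \<Rightarrow> real" where "sphere_base = (\<lambda>i. if i = 0 then 1 else 0)"

text \<open>Weak homotopy equivalence: bijection on path components and on all
  homotopy groups pi_n(X,x) (as based homotopy classes of maps S^n -> X), n \<ge> 0,
  for every base point x.\<close>

definition weak_homotopy_equivalence :: "'a topology \<Rightarrow> 'b topology \<Rightarrow> ('a \<Rightarrow> 'b) \<Rightarrow> bool" where
  "weak_homotopy_equivalence S T f \<longleftrightarrow>
     continuous_map S T f \<and>
     (\<forall>y\<in>topspace T. \<exists>x\<in>topspace S. path_component_of T (f x) y) \<and>
     (\<forall>n. \<forall>x\<in>topspace S.
        (\<forall>g1 g2. continuous_map (nsphere n) S g1 \<and> g1 sphere_base = x \<and>
                 continuous_map (nsphere n) S g2 \<and> g2 sphere_base = x \<and>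
                 homotopic_with (\<lambda>h. h sphere_base = f x) (nsphere n) T (f \<circ> g1) (f \<circ> g2)
                 \<longrightarrow> homotopic_with (\<lambda>h. h sphere_base = x) (nsphere n) S g1 g2) \<and>
        (\<forall>h. continuous_map (nsphere n) T h \<and> h sphere_base = f x \<longrightarrow>
           (\<exists>g. continuous_map (nsphere n) S g \<and> g sphere_base = x \<and>
                homotopic_with (\<lambda>k. k sphere_base = f x) (nsphere n) T (f \<circ> g) h)))"

definition homotopy_equivalence_map :: "'a topology \<Rightarrow> 'b topology \<Rightarrow> ('a \<Rightarrow> 'b) \<Rightarrow> bool" where
  "homotopy_equivalence_map S T f \<longleftrightarrow>
     continuous_map S T f \<and>
     (\<exists>g. continuous_map T S g \<and>
          homotopic_with (\<lambda>_. True) S S (g \<circ> f) id \<and>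
          homotopic_with (\<lambda>_. True) T T (f \<circ> g) id)"

definition weak_equivalence :: "'a sset \<Rightarrow> 'b sset \<Rightarrow> (nat \<Rightarrow> 'a \<Rightarrow> 'b) \<Rightarrow> bool" where
  "weak_equivalence X Y f \<longleftrightarrow> sset_map X Y f \<and>
     weak_homotopy_equivalence (realization X) (realization Y) (real_map X Y f)"

definition acyclic_cofibration :: "'a sset \<Rightarrow> 'b sset \<Rightarrow> (nat \<Rightarrow> 'a \<Rightarrow> 'b) \<Rightarrow> bool" where
  "acyclic_cofibration X Y f \<longleftrightarrow> sset_mono X Y f \<and> weak_equivalence X Y f"

end

theory Submission
  imports Defs
begin

(* |X| is a strong deformation retract of |X~|. A point with barycentric coordinates u in the
   simplex (sigma, s) of the copy of J indexed by sigma is pushed along the cone (j0, s, j1) on s: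
   at time tau it is the point (tau w, (1 - tau) u, tau (1 - w)) of that (n+2)-simplex of J, where w
   is the total weight of the vertices of s labelled j0. At tau = 1 it lies on the edge (j0, j1) = e,
   which is glued to sigma. For s in Delta^1 the cone stays in Delta^1, so the homotopy is stationary
   on |X|; it commutes with the simplicial operators and therefore descends to the realization.
   The homotopy category is a groupoid because every edge of X~ is an edge (a, b) of a copy of J,
   where the 2-simplex (a, b, a) and the degenerate edge (a, a) exhibit (b, a) as its inverse. *)

lemma equiv_equiv_closure_on: "equiv S (equiv_closure_on S R)"
proof (rule equivI)
  have "(R \<union> R\<inverse>)\<inverse> = R \<union> R\<inverse>" by auto
  then have "sym ((R \<union> R\<inverse>)\<^sup>*)"
    by (metis sym_conv_converse_eq rtrancl_converse)
  then show "sym (equiv_closure_on S R)"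
    unfolding equiv_closure_on_def by (auto simp: sym_def)
  show "trans (equiv_closure_on S R)"
    unfolding equiv_closure_on_def by (rule transI) (blast intro: rtrancl_trans)
qed (auto simp: equiv_closure_on_def refl_on_def)

lemma equiv_closure_onI: "(p, q) \<in> R \<Longrightarrow> p \<in> S \<Longrightarrow> q \<in> S \<Longrightarrow> (p, q) \<in> equiv_closure_on S R"
  unfolding equiv_closure_on_def by blast

lemma equiv_closure_on_invariant:
  assumes "\<And>p q. (p, q) \<in> R \<Longrightarrow> F p = F q" and "(p, q) \<in> equiv_closure_on S R"
  shows "F p = F q"
proof -
  have "(p, q) \<in> (R \<union> R\<inverse>)\<^sup>*" using assms(2) by (simp add: equiv_closure_on_def)
  then show ?thesis by induction (auto dest: assms(1))
qed

lemma equiv_closure_on_map: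
  assumes "\<And>p q. (p, q) \<in> R \<Longrightarrow> (f p, f q) \<in> R'" and "f ` S \<subseteq> S'"
    and "(p, q) \<in> equiv_closure_on S R"
  shows "(f p, f q) \<in> equiv_closure_on S' R'"
proof -
  have "(p, q) \<in> (R \<union> R\<inverse>)\<^sup>*" and "p \<in> S" "q \<in> S"
    using assms(3) by (auto simp: equiv_closure_on_def)
  moreover from this(1) have "(f p, f q) \<in> (R' \<union> R'\<inverse>)\<^sup>*"
    by induction (auto dest: assms(1) intro: rtrancl_into_rtrancl)
  ultimately show ?thesis using assms(2) by (auto simp: equiv_closure_on_def)
qed

lemma equiv_some_in_class:
  assumes "equiv A r" and "x \<in> A"
  shows "(x, SOME y. y \<in> r `` {x}) \<in> r"
  using someI[of "\<lambda>y. y \<in> r `` {x}", OF equiv_class_self[OF assms]] by simp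

lemma
  assumes "is_sset X"
  shows sset_act_closed: "dmor m n \<theta> \<Longrightarrow> x \<in> simp X n \<Longrightarrow> act X m n \<theta> x \<in> simp X m"
    and sset_act_id: "x \<in> simp X n \<Longrightarrow> act X n n id x = x"
    and sset_act_comp: "dmor m n \<theta> \<Longrightarrow> dmor n p \<phi> \<Longrightarrow> x \<in> simp X p \<Longrightarrow>
          act X m n \<theta> (act X n p \<phi> x) = act X m p (\<phi> \<circ> \<theta>) x"
    and sset_act_cong: "(\<And>i. i \<le> m \<Longrightarrow> \<theta> i = \<theta>' i) \<Longrightarrow> act X m n \<theta> x = act X m n \<theta>' x"
  using assms unfolding is_sset_def by blast+

lemma std_simplexI:
  "(\<And>i. 0 \<le> t i) \<Longrightarrow> (\<And>i. n < i \<Longrightarrow> t i = 0) \<Longrightarrow> sum t {..n} = 1 \<Longrightarrow> t \<in> std_simplex n"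
  unfolding std_simplex_def by blast

lemma
  assumes "t \<in> std_simplex n"
  shows std_simplex_nonneg: "0 \<le> t i"
    and std_simplex_vanishes: "n < i \<Longrightarrow> t i = 0"
    and std_simplex_sum: "sum t {..n} = 1"
  using assms unfolding std_simplex_def by auto

lemma std_simplex_1_eqI:
  assumes "p \<in> std_simplex 1" "q \<in> std_simplex 1" "p 0 = q 0"
  shows "p = q"
proof
  fix i
  have "p 0 + p 1 = 1" "q 0 + q 1 = 1"
    using std_simplex_sum[OF assms(1)] std_simplex_sum[OF assms(2)] by (simp_all add: numeral_2_eq_2)
  then show "p i = q i"
    using assms(3) std_simplex_vanishes[OF assms(1), of i] std_simplex_vanishes[OF assms(2), of i]
    by (cases "i = 0"; cases "i = 1") auto
qed

lemma sum_simplex_push: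
  assumes "dmor m n \<theta>"
  shows "sum (simplex_push m \<theta> t) {j. j \<le> n \<and> P j} = sum t {i. i \<le> m \<and> P (\<theta> i)}"
proof -
  let ?S = "{i. i \<le> m \<and> P (\<theta> i)}" and ?T = "{j. j \<le> n \<and> P j}"
  have sub: "\<theta> ` ?S \<subseteq> ?T" using assms unfolding dmor_def by auto
  have "sum (simplex_push m \<theta> t) ?T = (\<Sum>y\<in>?T. sum t {x. x \<in> ?S \<and> \<theta> x = y})"
    unfolding simplex_push_def by (intro sum.cong refl arg_cong2[where f = sum]) auto
  also have "\<dots> = sum t ?S" by (rule sum.group[OF _ _ sub]) auto
  finally show ?thesis .
qed

lemma simplex_push_std_simplex:
  assumes "dmor m n \<theta>" and t: "t \<in> std_simplex m"
  shows "simplex_push m \<theta> t \<in> std_simplex n"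
proof (rule std_simplexI)
  show "0 \<le> simplex_push m \<theta> t j" for j
    unfolding simplex_push_def by (simp add: sum_nonneg std_simplex_nonneg[OF t])
  show "simplex_push m \<theta> t j = 0" if "n < j" for j
  proof -
    have "{i. i \<le> m \<and> \<theta> i = j} = {}" using assms(1) that unfolding dmor_def by fastforce
    then show ?thesis unfolding simplex_push_def by (simp only: sum.empty)
  qed
  show "sum (simplex_push m \<theta> t) {..n} = 1"
    using sum_simplex_push[OF assms(1), of t "\<lambda>_. True"] std_simplex_sum[OF t] by (simp add: atMost_def)
qed

lemma sum_split_ends:
  "sum (f :: nat \<Rightarrow> 'a::comm_monoid_add) {i. i \<le> Suc (Suc n) \<and> Q i} = (if Q 0 then f 0 else 0)
     + sum (\<lambda>i. f (Suc i)) {i. i \<le> n \<and> Q (Suc i)} + (if Q (Suc (Suc n)) then f (Suc (Suc n)) else 0)"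
proof -
  let ?g = "\<lambda>i. if Q i then f i else 0"
  have filter: "sum g {i. i \<le> N \<and> Q' i} = (\<Sum>i\<le>N. if Q' i then g i else 0)"
    for g :: "nat \<Rightarrow> 'a" and N Q'
  proof -
    have "{i. i \<le> N \<and> Q' i} = {x \<in> {..N}. Q' x}" by auto
    then have "sum g {i. i \<le> N \<and> Q' i} = sum g {x \<in> {..N}. Q' x}" by simp
    also have "\<dots> = (\<Sum>i\<le>N. if Q' i then g i else 0)" by (rule sum.inter_filter) simp
    finally show ?thesis .
  qed
  have "(\<Sum>i\<le>Suc (Suc n). ?g i) = (\<Sum>i\<le>Suc n. ?g i) + ?g (Suc (Suc n))" by (rule sum.atMost_Suc)
  also have "(\<Sum>i\<le>Suc n. ?g i) = ?g 0 + (\<Sum>i\<le>n. ?g (Suc i))" by (rule sum.atMost_Suc_shift)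
  finally show ?thesis unfolding filter by simp
qed

section \<open>Geometric realization\<close>

abbreviation unit_interval :: "real topology" where
  "unit_interval \<equiv> top_of_set {0..1}"

abbreviation simplex_top :: "nat \<Rightarrow> (nat \<Rightarrow> real) topology" where
  "simplex_top n \<equiv> subtopology (powertop_real UNIV) (std_simplex n)"

lemma openin_pre_top:
  "openin (pre_top X) U \<longleftrightarrow>
     U \<subseteq> pre_points X \<and> (\<forall>n x. x \<in> simp X n \<longrightarrow> openin (simplex_top n) {t. (n, x, t) \<in> U})"
proof -
  have slice_Int: "{t. (n, x, t) \<in> S \<inter> T} = {t. (n, x, t) \<in> S} \<inter> {t. (n, x, t) \<in> T}"
    and slice_Union: "{t. (n, x, t) \<in> \<Union>K} = \<Union>((\<lambda>S. {t. (n, x, t) \<in> S}) ` K)"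
    for n x and S T :: "(nat \<times> 'a \<times> (nat \<Rightarrow> real)) set" and K
    by auto
  have "istopology (\<lambda>U. U \<subseteq> pre_points X \<and>
      (\<forall>n x. x \<in> simp X n \<longrightarrow> openin (simplex_top n) {t. (n, x, t) \<in> U}))"
    unfolding istopology_def slice_Int slice_Union by (auto intro!: openin_Union)
  then show ?thesis unfolding pre_top_def by (simp add: topology_inverse')
qed

lemma topspace_pre_top: "topspace (pre_top X) = pre_points X"
proof (rule subset_antisym)
  show "topspace (pre_top X) \<subseteq> pre_points X"
    using openin_topspace[of "pre_top X"] unfolding openin_pre_top by blast
  have "openin (simplex_top n) {t. (n, x, t) \<in> pre_points X}" if "x \<in> simp X n" for n x
  proof -
    have "{t. (n, x, t) \<in> pre_points X} = topspace (simplex_top n)"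
      using that by (simp add: pre_points_def)
    then show ?thesis by (simp only: openin_topspace)
  qed
  then have "openin (pre_top X) (pre_points X)"
    unfolding openin_pre_top by simp
  then show "pre_points X \<subseteq> topspace (pre_top X)" by (rule openin_subset)
qed

lemma equiv_real_rel: "equiv (pre_points X) (real_rel X)"
  unfolding real_rel_def by (rule equiv_equiv_closure_on)

lemma openin_realization:
  "openin (realization X) U \<longleftrightarrow> U \<subseteq> pre_points X // real_rel X \<and> openin (pre_top X) (\<Union>U)"
proof -
  have "istopology (\<lambda>U. U \<subseteq> pre_points X // real_rel X \<and> openin (pre_top X) (\<Union>U))"
    unfolding istopology_def
  proof (rule conjI; intro allI impI)
    fix S T :: "(nat \<times> 'a \<times> (nat \<Rightarrow> real)) set set"
    assume S: "S \<subseteq> pre_points X // real_rel X \<and> openin (pre_top X) (\<Union>S)"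
      and T: "T \<subseteq> pre_points X // real_rel X \<and> openin (pre_top X) (\<Union>T)"
    have "\<Union>(S \<inter> T) = \<Union>S \<inter> \<Union>T"
    proof (intro equalityI subsetI)
      fix p assume "p \<in> \<Union>S \<inter> \<Union>T"
      then obtain u v where uv: "u \<in> S" "v \<in> T" "p \<in> u" "p \<in> v" by blast
      then have "u = v" using S T quotient_disj[OF equiv_real_rel[of X]] by blast
      then show "p \<in> \<Union>(S \<inter> T)" using uv by blast
    qed blast
    then show "S \<inter> T \<subseteq> pre_points X // real_rel X \<and> openin (pre_top X) (\<Union>(S \<inter> T))"
      using S T by auto
  next
    fix K :: "(nat \<times> 'a \<times> (nat \<Rightarrow> real)) set set set"
    assume K: "\<forall>S\<in>K. S \<subseteq> pre_points X // real_rel X \<and> openin (pre_top X) (\<Union>S)"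
    have "openin (pre_top X) (\<Union>(Union ` K))" using K by (intro openin_Union) blast
    moreover have "\<Union>(\<Union>K) = \<Union>(Union ` K)" by blast
    ultimately show "\<Union>K \<subseteq> pre_points X // real_rel X \<and> openin (pre_top X) (\<Union>(\<Union>K))"
      using K by auto
  qed
  then show ?thesis unfolding realization_def by (simp add: topology_inverse')
qed

lemma topspace_realization: "topspace (realization X) = pre_points X // real_rel X"
proof (rule subset_antisym)
  show "topspace (realization X) \<subseteq> pre_points X // real_rel X"
    using openin_topspace[of "realization X"] unfolding openin_realization by blast
  have "openin (realization X) (pre_points X // real_rel X)"
    unfolding openin_realization Union_quotient[OF equiv_real_rel]
    using openin_topspace[of "pre_top X"] by (simp add: topspace_pre_top)
  then show "pre_points X // real_rel X \<subseteq> topspace (realization X)" by (rule openin_subset)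
qed

definition real_class :: "'a sset \<Rightarrow> nat \<times> 'a \<times> (nat \<Rightarrow> real) \<Rightarrow> (nat \<times> 'a \<times> (nat \<Rightarrow> real)) set" where
  "real_class X p = real_rel X `` {p}"

lemma quotient_map_real_class: "quotient_map (pre_top X) (realization X) (real_class X)"
  unfolding quotient_map_def
proof (intro conjI allI impI)
  show "real_class X ` topspace (pre_top X) = topspace (realization X)"
    unfolding topspace_pre_top topspace_realization real_class_def quotient_def by blast
  fix U assume U: "U \<subseteq> topspace (realization X)"
  have "{p \<in> topspace (pre_top X). real_class X p \<in> U} = \<Union>U"
  proof (intro equalityI subsetI)
    fix p assume "p \<in> {p \<in> topspace (pre_top X). real_class X p \<in> U}"
    then show "p \<in> \<Union>U"
      using equiv_class_self[OF equiv_real_rel] unfolding real_class_def topspace_pre_top by blast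
  next
    fix p assume "p \<in> \<Union>U"
    then obtain c where c: "c \<in> U" "p \<in> c" by blast
    then have cq: "c \<in> pre_points X // real_rel X" using U by (auto simp: topspace_realization)
    then obtain p0 where p0: "p0 \<in> pre_points X" "c = real_rel X `` {p0}" by (rule quotientE)
    then have "(p0, p) \<in> real_rel X" using c(2) by simp
    then have "real_rel X `` {p0} = real_rel X `` {p}" by (rule equiv_class_eq[OF equiv_real_rel])
    moreover have "p \<in> pre_points X" using in_quotient_imp_subset[OF equiv_real_rel cq] c(2) by blast
    ultimately have "c = real_rel X `` {p}" and "p \<in> pre_points X" using p0(2) by simp_all
    then show "p \<in> {p \<in> topspace (pre_top X). real_class X p \<in> U}"
      using c by (simp add: real_class_def topspace_pre_top)
  qed
  then show "openin (pre_top X) {p \<in> topspace (pre_top X). real_class X p \<in> U} = openin (realization X) U"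
    using U by (simp add: openin_realization topspace_realization)
qed

lemma real_classE:
  assumes "c \<in> topspace (realization X)"
  obtains n x t where "x \<in> simp X n" "t \<in> std_simplex n" "c = real_class X (n, x, t)"
  using assms unfolding topspace_realization real_class_def pre_points_def by (auto elim!: quotientE)

lemma real_class_act:
  assumes "dmor m n \<theta>" "x \<in> simp X n" "act X m n \<theta> x \<in> simp X m" "t \<in> std_simplex m"
  shows "real_class X (m, act X m n \<theta> x, t) = real_class X (n, x, simplex_push m \<theta> t)"
  unfolding real_class_def
proof (rule equiv_class_eq[OF equiv_real_rel])
  show "((m, act X m n \<theta> x, t), (n, x, simplex_push m \<theta> t)) \<in> real_rel X"
    unfolding real_rel_def using assms simplex_push_std_simplex[OF assms(1,4)]
    by (intro equiv_closure_onI) (auto simp: pre_points_def)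
qed

lemma some_real_class_invariant:
  assumes resp: "\<And>m n \<theta> x t. dmor m n \<theta> \<Longrightarrow> x \<in> simp X n \<Longrightarrow> t \<in> std_simplex m \<Longrightarrow>
        G (m, act X m n \<theta> x, t) = G (n, x, simplex_push m \<theta> t)"
    and p: "p \<in> pre_points X"
  shows "G (SOME q. q \<in> real_class X p) = G p"
proof -
  have "(p, SOME q. q \<in> real_class X p) \<in> real_rel X"
    unfolding real_class_def by (rule equiv_some_in_class[OF equiv_real_rel p])
  then show ?thesis
    unfolding real_rel_def by (rule equiv_closure_on_invariant[symmetric, rotated]) (auto intro: resp)
qed

lemma continuous_map_real_class:
  assumes x: "x \<in> simp X n" and F: "continuous_map Z (simplex_top n) F"
  shows "continuous_map Z (realization X) (\<lambda>z. real_class X (n, x, F z))"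
proof -
  have "continuous_map (simplex_top n) (pre_top X) (\<lambda>t. (n, x, t))"
    unfolding continuous_map_def
  proof (intro conjI allI impI)
    show "(\<lambda>t. (n, x, t)) \<in> topspace (simplex_top n) \<rightarrow> topspace (pre_top X)"
      using x by (auto simp: topspace_pre_top pre_points_def)
    fix U assume U: "openin (pre_top X) U"
    then have "{t \<in> topspace (simplex_top n). (n, x, t) \<in> U} = {t. (n, x, t) \<in> U}"
      unfolding openin_pre_top pre_points_def by auto
    then show "openin (simplex_top n) {t \<in> topspace (simplex_top n). (n, x, t) \<in> U}"
      using U x unfolding openin_pre_top by simp
  qed
  then have "continuous_map Z (realization X) (real_class X \<circ> (\<lambda>t. (n, x, t)) \<circ> F)"
    by (intro continuous_map_compose[OF F] continuous_map_compose[OF _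
        quotient_imp_continuous_map[OF quotient_map_real_class]])
  then show ?thesis by (simp add: o_def)
qed

lemma openin_pre_top_simplex:
  assumes "x \<in> simp X n" and "openin (simplex_top n) V"
  shows "openin (pre_top X) ((\<lambda>t. (n, x, t)) ` V)"
  unfolding openin_pre_top
proof (intro conjI allI impI)
  show "(\<lambda>t. (n, x, t)) ` V \<subseteq> pre_points X"
    using assms openin_subset[OF assms(2)] by (auto simp: pre_points_def)
  fix n' x'
  have "{t. (n', x', t) \<in> (\<lambda>t. (n, x, t)) ` V} = (if n' = n \<and> x' = x then V else {})"
    by auto
  then show "openin (simplex_top n') {t. (n', x', t) \<in> (\<lambda>t. (n, x, t)) ` V}"
    using assms(2) by simp
qed

lemma continuous_map_prod_pre_top:
  assumes slice: "\<And>n x. x \<in> simp X n \<Longrightarrow>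
      continuous_map (prod_topology unit_interval (simplex_top n)) T (\<lambda>(\<tau>, t). G \<tau> (n, x, t))"
  shows "continuous_map (prod_topology unit_interval (pre_top X)) T (\<lambda>(\<tau>, p). G \<tau> p)"
  unfolding continuous_map_def
proof (intro conjI allI impI)
  show "(\<lambda>(\<tau>, p). G \<tau> p) \<in> topspace (prod_topology unit_interval (pre_top X)) \<rightarrow> topspace T"
  proof
    fix z assume "z \<in> topspace (prod_topology unit_interval (pre_top X))"
    then obtain \<tau> n x t where z: "z = (\<tau>, (n, x, t))" "\<tau> \<in> {0..1}" "x \<in> simp X n" "t \<in> std_simplex n"
      by (auto simp: topspace_pre_top pre_points_def)
    have ts: "(\<tau>, t) \<in> topspace (prod_topology unit_interval (simplex_top n))" using z by simp
    have "(\<lambda>(\<tau>, t). G \<tau> (n, x, t)) (\<tau>, t) \<in> topspace T"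
      using funcset_mem[OF continuous_map_funspace[OF slice[OF z(3)]] ts] .
    then show "(\<lambda>(\<tau>, p). G \<tau> p) z \<in> topspace T" using z by simp
  qed
next
  fix U assume U: "openin T U"
  let ?W = "{z \<in> topspace (prod_topology unit_interval (pre_top X)). (\<lambda>(\<tau>, p). G \<tau> p) z \<in> U}"
  show "openin (prod_topology unit_interval (pre_top X)) ?W"
    unfolding openin_prod_topology_alt
  proof (intro allI impI)
    fix \<tau> p assume tp: "(\<tau>, p) \<in> ?W"
    then obtain n x t where p: "p = (n, x, t)" "\<tau> \<in> {0..1}" "x \<in> simp X n" "t \<in> std_simplex n"
      by (auto simp: topspace_pre_top pre_points_def)
    let ?W' = "{z \<in> topspace (prod_topology unit_interval (simplex_top n)). (\<lambda>(\<tau>, t). G \<tau> (n, x, t)) z \<in> U}"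
    have oW': "openin (prod_topology unit_interval (simplex_top n)) ?W'"
      using openin_continuous_map_preimage[OF slice[OF p(3)] U] .
    have GU: "G \<tau> (n, x, t) \<in> U" using tp p(1) by simp
    have mem: "(\<tau>, t) \<in> ?W'" using GU p(2,4) by simp
    have "\<forall>a b. (a, b) \<in> ?W' \<longrightarrow> (\<exists>U V. openin unit_interval U \<and> openin (simplex_top n) V \<and>
        a \<in> U \<and> b \<in> V \<and> U \<times> V \<subseteq> ?W')"
      using oW' by (simp only: openin_prod_topology_alt)
    from this[rule_format, OF mem]
    obtain U1 V1 where UV: "openin unit_interval U1" "openin (simplex_top n) V1"
      "\<tau> \<in> U1" "t \<in> V1" "U1 \<times> V1 \<subseteq> ?W'"
      by blast
    let ?V = "(\<lambda>t'. (n, x, t')) ` V1"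
    have oV: "openin (pre_top X) ?V" by (rule openin_pre_top_simplex[OF p(3) UV(2)])
    have "U1 \<times> ?V \<subseteq> ?W"
    proof
      fix z assume "z \<in> U1 \<times> ?V"
      then obtain a b where ab: "z = (a, (n, x, b))" "a \<in> U1" "b \<in> V1" by auto
      then have "(a, b) \<in> ?W'" using UV(5) by auto
      then show "z \<in> ?W" using ab p(3) by (auto simp: topspace_pre_top pre_points_def)
    qed
    then show "\<exists>U V. openin unit_interval U \<and> openin (pre_top X) V \<and> \<tau> \<in> U \<and> p \<in> V \<and> U \<times> V \<subseteq> ?W"
      using UV oV p by blast
  qed
qed

lemma continuous_map_prod_realization:
  assumes slice: "\<And>n x. x \<in> simp X n \<Longrightarrow>
      continuous_map (prod_topology unit_interval (simplex_top n)) T (\<lambda>(\<tau>, t). G \<tau> (n, x, t))"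
    and resp: "\<And>\<tau> m n \<theta> x t. \<tau> \<in> {0..1} \<Longrightarrow> dmor m n \<theta> \<Longrightarrow> x \<in> simp X n \<Longrightarrow> t \<in> std_simplex m \<Longrightarrow>
        G \<tau> (m, act X m n \<theta> x, t) = G \<tau> (n, x, simplex_push m \<theta> t)"
  shows "continuous_map (prod_topology unit_interval (realization X)) T (\<lambda>(\<tau>, c). G \<tau> (SOME p. p \<in> c))"
proof (rule continuous_compose_quotient_map)
  show "quotient_map (prod_topology unit_interval (pre_top X)) (prod_topology unit_interval (realization X))
      (\<lambda>(\<tau>, p). (\<tau>, real_class X p))"
    by (rule quotient_map_prod_right[OF _ _ quotient_map_real_class])
      (simp_all add: compact_imp_locally_compact_space compact_space_subtopology Hausdorff_space_subtopology)
  show "continuous_map (prod_topology unit_interval (pre_top X)) T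
      ((\<lambda>(\<tau>, c). G \<tau> (SOME p. p \<in> c)) \<circ> (\<lambda>(\<tau>, p). (\<tau>, real_class X p)))"
  proof (rule continuous_map_eq[OF continuous_map_prod_pre_top[OF slice]])
    fix z assume "z \<in> topspace (prod_topology unit_interval (pre_top X))"
    then obtain \<tau> p where "z = (\<tau>, p)" "p \<in> pre_points X" "\<tau> \<in> {0..1}"
      by (auto simp: topspace_pre_top)
    then show "(\<lambda>(\<tau>, p). G \<tau> p) z = ((\<lambda>(\<tau>, c). G \<tau> (SOME p. p \<in> c)) \<circ> (\<lambda>(\<tau>, p). (\<tau>, real_class X p))) z"
      using some_real_class_invariant[of X "G \<tau>" p] resp by simp
  qed
qed

lemma continuous_map_realization:
  assumes slice: "\<And>n x. x \<in> simp X n \<Longrightarrow> continuous_map (simplex_top n) T (\<lambda>t. G (n, x, t))"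
    and resp: "\<And>m n \<theta> x t. dmor m n \<theta> \<Longrightarrow> x \<in> simp X n \<Longrightarrow> t \<in> std_simplex m \<Longrightarrow>
        G (m, act X m n \<theta> x, t) = G (n, x, simplex_push m \<theta> t)"
  shows "continuous_map (realization X) T (\<lambda>c. G (SOME p. p \<in> c))"
proof -
  have "continuous_map (prod_topology unit_interval (simplex_top n)) T (\<lambda>(\<tau>, t). G (n, x, t))"
    if "x \<in> simp X n" for n x
    using continuous_map_compose[OF continuous_map_snd[of unit_interval] slice[OF that]] by (simp add: o_def split_def)
  then have H: "continuous_map (prod_topology unit_interval (realization X)) T (\<lambda>(\<tau>, c). G (SOME p. p \<in> c))"
    using continuous_map_prod_realization[of X T "\<lambda>_. G"] resp by blast
  have "continuous_map (realization X) (prod_topology unit_interval (realization X)) (\<lambda>c. (0, c))"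
    by (simp add: continuous_map_pairwise o_def)
  from continuous_map_compose[OF this H]
  show ?thesis by (simp add: o_def)
qed

lemma real_class_sset_map_act:
  assumes X: "is_sset X" and f: "sset_map X Y f"
    and "dmor m n \<theta>" "x \<in> simp X n" "t \<in> std_simplex m"
  shows "real_class Y (m, f m (act X m n \<theta> x), t) = real_class Y (n, f n x, simplex_push m \<theta> t)"
proof -
  have eq: "f m (act X m n \<theta> x) = act Y m n \<theta> (f n x)"
    using f assms(3-4) unfolding sset_map_def by blast
  have "f m (act X m n \<theta> x) \<in> simp Y m" "f n x \<in> simp Y n"
    using f assms(3-4) sset_act_closed[OF X] unfolding sset_map_def by blast+
  then have "act Y m n \<theta> (f n x) \<in> simp Y m" "f n x \<in> simp Y n" unfolding eq .
  then show ?thesis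
    unfolding eq using assms(3,5) by (intro real_class_act) simp_all
qed

lemma real_map_eq: "real_map X Y f = (\<lambda>c. (\<lambda>(n, x, t). real_class Y (n, f n x, t)) (SOME p. p \<in> c))"
  by (rule ext) (simp only: real_map_def real_class_def)

lemma real_map_real_class:
  assumes X: "is_sset X" and f: "sset_map X Y f" and "x \<in> simp X n" "t \<in> std_simplex n"
  shows "real_map X Y f (real_class X (n, x, t)) = real_class Y (n, f n x, t)"
  using some_real_class_invariant[of X "\<lambda>(n, x, t). real_class Y (n, f n x, t)" "(n, x, t)"]
    real_class_sset_map_act[OF X f] assms(3-4)
  by (simp add: real_map_eq pre_points_def)

lemma continuous_map_real_map:
  assumes X: "is_sset X" and f: "sset_map X Y f"
  shows "continuous_map (realization X) (realization Y) (real_map X Y f)"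
  unfolding real_map_eq
proof (rule continuous_map_realization[where G = "\<lambda>(n, x, t). real_class Y (n, f n x, t)"])
  show "continuous_map (simplex_top n) (realization Y) (\<lambda>t. (\<lambda>(n, x, t). real_class Y (n, f n x, t)) (n, x, t))"
    if "x \<in> simp X n" for n x
    using continuous_map_real_class[of "f n x" Y n "simplex_top n" "\<lambda>t. t"] f that
    by (simp add: sset_map_def)
qed (use real_class_sset_map_act[OF X f] in auto)

lemma homotopic_with_path_component_of:
  assumes "homotopic_with P S T f g" and x: "x \<in> topspace S"
  shows "path_component_of T (f x) (g x)"
proof -
  obtain h where h: "continuous_map (prod_topology unit_interval S) T h"
    "\<forall>x. h (0, x) = f x" "\<forall>x. h (1, x) = g x"
    using assms(1) unfolding homotopic_with_def by blast
  have "continuous_map unit_interval (prod_topology unit_interval S) (\<lambda>t. (t, x))"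
    using x by (simp add: continuous_map_pairwise o_def)
  from continuous_map_compose[OF this h(1)] have "pathin T (\<lambda>t. h (t, x))"
    by (simp add: pathin_def o_def)
  then show ?thesis unfolding path_component_of_def using h(2,3) by force
qed

lemma homotopic_with_based_cancel_left:
  assumes g: "continuous_map T S g" and gf: "\<And>x. x \<in> topspace S \<Longrightarrow> g (f x) = x"
    and b: "b \<in> topspace Z" and x: "x \<in> topspace S"
    and h1: "continuous_map Z S h1" and h2: "continuous_map Z S h2"
    and hom: "homotopic_with (\<lambda>k. k b = f x) Z T (f \<circ> h1) (f \<circ> h2)"
  shows "homotopic_with (\<lambda>k. k b = x) Z S h1 h2"
proof -
  have "homotopic_with (\<lambda>k. k b = x) Z S (g \<circ> (f \<circ> h1)) (g \<circ> (f \<circ> h2))"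
    by (rule homotopic_with_compose_continuous_map_left[OF hom g]) (simp add: gf x)
  then show ?thesis
  proof (rule homotopic_with_eq)
    fix z assume "z \<in> topspace Z"
    then have "h1 z \<in> topspace S" "h2 z \<in> topspace S"
      using continuous_map_image_subset_topspace[OF h1] continuous_map_image_subset_topspace[OF h2] by blast+
    then show "h1 z = (g \<circ> (f \<circ> h1)) z" "h2 z = (g \<circ> (f \<circ> h2)) z" by (simp_all add: gf)
  qed (simp add: b)
qed

lemma homotopic_with_based_deformation:
  assumes H: "homotopic_with (\<lambda>k. \<forall>y\<in>f ` topspace S. k y = y) T T id (f \<circ> g)"
    and x: "x \<in> topspace S" and h: "continuous_map Z T h" and hb: "h b = f x"
  shows "homotopic_with (\<lambda>k. k b = f x) Z T (f \<circ> (g \<circ> h)) h"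
proof -
  have "homotopic_with (\<lambda>k. k b = f x) Z T (id \<circ> h) ((f \<circ> g) \<circ> h)"
    by (rule homotopic_with_compose_continuous_map_right[OF H h]) (use x hb in auto)
  then show ?thesis by (simp add: homotopic_with_sym o_assoc)
qed

lemma sphere_base_in_nsphere: "sphere_base \<in> topspace (nsphere n)"
proof -
  have "(\<Sum>i\<le>n. (if i = 0 then 1 else 0 :: real)\<^sup>2) = (\<Sum>i\<le>n. if i = 0 then 1 else 0)"
    by (rule sum.cong) auto
  also have "\<dots> = 1" by simp
  finally show ?thesis by (simp add: nsphere sphere_base_def)
qed

context
  fixes S :: "'a topology" and T :: "'b topology" and f g
  assumes f: "continuous_map S T f" and g: "continuous_map T S g"
    and gf: "\<And>x. x \<in> topspace S \<Longrightarrow> g (f x) = x"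
    and H: "homotopic_with (\<lambda>k. \<forall>y\<in>f ` topspace S. k y = y) T T id (f \<circ> g)"
begin

lemma deformation_retract_homotopy_equivalence_map: "homotopy_equivalence_map S T f"
  unfolding homotopy_equivalence_map_def
proof (intro conjI exI[of _ g] f g)
  show "homotopic_with (\<lambda>_. True) S S (g \<circ> f) id" by (rule homotopic_with_id2) (rule gf)
  show "homotopic_with (\<lambda>_. True) T T (f \<circ> g) id"
    by (rule homotopic_with_symD, rule homotopic_with_mono[OF H]) simp
qed

lemma deformation_retract_weak_homotopy_equivalence: "weak_homotopy_equivalence S T f"
  unfolding weak_homotopy_equivalence_def
proof (intro conjI ballI allI impI f)
  fix y assume y: "y \<in> topspace T"
  have "path_component_of T (f (g y)) y"
    using homotopic_with_path_component_of[OF H y] by (simp add: path_component_of_sym_iff)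
  moreover have "g y \<in> topspace S" using continuous_map_image_subset_topspace[OF g] y by blast
  ultimately show "\<exists>x\<in>topspace S. path_component_of T (f x) y" by blast
next
  fix n x h1 h2 assume x: "x \<in> topspace S" and
    "continuous_map (nsphere n) S h1 \<and> h1 sphere_base = x \<and> continuous_map (nsphere n) S h2 \<and>
     h2 sphere_base = x \<and> homotopic_with (\<lambda>k. k sphere_base = f x) (nsphere n) T (f \<circ> h1) (f \<circ> h2)"
  then have h1: "continuous_map (nsphere n) S h1" and h2: "continuous_map (nsphere n) S h2"
    and hom: "homotopic_with (\<lambda>k. k sphere_base = f x) (nsphere n) T (f \<circ> h1) (f \<circ> h2)"
    by simp_all
  show "homotopic_with (\<lambda>k. k sphere_base = x) (nsphere n) S h1 h2"
    by (rule homotopic_with_based_cancel_left[OF g gf sphere_base_in_nsphere x h1 h2 hom])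
next
  fix n x h assume x: "x \<in> topspace S" and "continuous_map (nsphere n) T h \<and> h sphere_base = f x"
  then have h: "continuous_map (nsphere n) T h" and hb: "h sphere_base = f x" by simp_all
  show "\<exists>h'. continuous_map (nsphere n) S h' \<and> h' sphere_base = x \<and>
      homotopic_with (\<lambda>k. k sphere_base = f x) (nsphere n) T (f \<circ> h') h"
  proof (intro exI conjI)
    show "continuous_map (nsphere n) S (g \<circ> h)" by (rule continuous_map_compose[OF h g])
    show "(g \<circ> h) sphere_base = x" using hb gf[OF x] by simp
    show "homotopic_with (\<lambda>k. k sphere_base = f x) (nsphere n) T (f \<circ> (g \<circ> h)) h"
      using hb by (rule homotopic_with_based_deformation[OF H x h])
  qed
qed

end

definition pull :: "nat \<Rightarrow> (nat \<Rightarrow> nat) \<Rightarrow> (nat \<Rightarrow> nat) \<Rightarrow> nat \<Rightarrow> nat" where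
  "pull m \<theta> s = (\<lambda>i. if i \<le> m then s (\<theta> i) else 0)"

lemma simp_J_sset: "s \<in> simp J_sset n \<longleftrightarrow> (\<forall>i\<le>n. s i \<le> 1) \<and> (\<forall>i>n. s i = 0)"
  by (simp add: J_sset_def)

lemma simp_Delta1_sset: "s \<in> simp Delta1_sset n \<longleftrightarrow> dmor n 1 s \<and> (\<forall>i>n. s i = 0)"
  by (simp add: Delta1_sset_def)

lemma act_J_sset: "act J_sset m n \<theta> s = pull m \<theta> s"
  by (simp add: J_sset_def pull_def)

lemma Delta1_sset_subset_J_sset: "s \<in> simp Delta1_sset n \<Longrightarrow> s \<in> simp J_sset n"
  unfolding simp_Delta1_sset simp_J_sset dmor_def by auto

lemma pull_J_sset: "dmor m n \<theta> \<Longrightarrow> s \<in> simp J_sset n \<Longrightarrow> pull m \<theta> s \<in> simp J_sset m"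
  unfolding simp_J_sset dmor_def pull_def by auto

lemma pull_Delta1_sset: "dmor m n \<theta> \<Longrightarrow> s \<in> simp Delta1_sset n \<Longrightarrow> pull m \<theta> s \<in> simp Delta1_sset m"
  unfolding simp_Delta1_sset dmor_def pull_def by auto

lemma simp_copr_sset: "simp (copr_sset I Y) n = I \<times> simp Y n"
  by (simp add: copr_sset_def)

lemma act_copr_sset: "act (copr_sset I Y) m n \<theta> p = (fst p, act Y m n \<theta> (snd p))"
  by (simp add: copr_sset_def)

lemma act_pull:
  assumes X: "is_sset X" and "dmor m n \<theta>" "dmor n 1 s" "x \<in> simp X 1"
  shows "act X m n \<theta> (act X n 1 s x) = act X m 1 (pull m \<theta> s) x"
  using sset_act_comp[OF X assms(2-4)] sset_act_cong[OF X, of m "s \<circ> \<theta>" "pull m \<theta> s"]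
  by (simp add: pull_def)

abbreviation edge_copies :: "'a sset \<Rightarrow> ('a \<times> (nat \<Rightarrow> nat)) sset" where
  "edge_copies X \<equiv> copr_sset (simp X 1) Delta1_sset"

abbreviation J_copies :: "'a sset \<Rightarrow> ('a \<times> (nat \<Rightarrow> nat)) sset" where
  "J_copies X \<equiv> copr_sset (simp X 1) J_sset"

abbreviation tilde_reps :: "'a sset \<Rightarrow> nat \<Rightarrow> ('a + 'a \<times> (nat \<Rightarrow> nat)) set" where
  "tilde_reps X n \<equiv> simp X n <+> simp (J_copies X) n"

abbreviation tilde_act :: "'a sset \<Rightarrow> nat \<Rightarrow> nat \<Rightarrow> (nat \<Rightarrow> nat)
    \<Rightarrow> 'a + 'a \<times> (nat \<Rightarrow> nat) \<Rightarrow> 'a + 'a \<times> (nat \<Rightarrow> nat)" where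
  "tilde_act X \<equiv> sum_act X (J_copies X)"

definition tilde_rel :: "'a sset \<Rightarrow> nat \<Rightarrow> (('a + 'a \<times> (nat \<Rightarrow> nat)) \<times> ('a + 'a \<times> (nat \<Rightarrow> nat))) set" where
  "tilde_rel X n = po_rel (edge_copies X) X (J_copies X) (classify_map X) (\<lambda>n p. p) n"

definition tilde_class :: "'a sset \<Rightarrow> nat \<Rightarrow> 'a + 'a \<times> (nat \<Rightarrow> nat) \<Rightarrow> ('a + 'a \<times> (nat \<Rightarrow> nat)) set" where
  "tilde_class X n z = tilde_rel X n `` {z}"

definition tilde_glue :: "'a sset \<Rightarrow> nat \<Rightarrow> (('a + 'a \<times> (nat \<Rightarrow> nat)) \<times> ('a + 'a \<times> (nat \<Rightarrow> nat))) set" where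
  "tilde_glue X n = {(Inl (act X n 1 s \<sigma>), Inr (\<sigma>, s)) | \<sigma> s. \<sigma> \<in> simp X 1 \<and> s \<in> simp Delta1_sset n}"

lemma tilde_rel_eq: "tilde_rel X n = equiv_closure_on (tilde_reps X n) (tilde_glue X n)"
  unfolding tilde_rel_def po_rel_def tilde_glue_def classify_map_def copr_sset_def by auto

lemma tilde_rel_invariant:
  assumes "\<And>\<sigma> s. \<sigma> \<in> simp X 1 \<Longrightarrow> s \<in> simp Delta1_sset n \<Longrightarrow> F (Inl (act X n 1 s \<sigma>)) = F (Inr (\<sigma>, s))"
    and "(z, z') \<in> tilde_rel X n"
  shows "F z = F z'"
  using assms(2) unfolding tilde_rel_eq
proof (rule equiv_closure_on_invariant[rotated])
  fix p q assume "(p, q) \<in> tilde_glue X n"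
  then show "F p = F q" unfolding tilde_glue_def using assms(1) by blast
qed

lemma equiv_tilde_rel: "equiv (tilde_reps X n) (tilde_rel X n)"
  unfolding tilde_rel_eq by (rule equiv_equiv_closure_on)

lemma Inl_in_Plus_iff [simp]: "Inl a \<in> A <+> B \<longleftrightarrow> a \<in> A"
  by (auto simp: Plus_def)

lemma Inr_in_Plus_iff [simp]: "Inr b \<in> A <+> B \<longleftrightarrow> b \<in> B"
  by (auto simp: Plus_def)

lemma Inr_in_tilde_reps: "\<sigma> \<in> simp X 1 \<Longrightarrow> s \<in> simp J_sset n \<Longrightarrow> Inr (\<sigma>, s) \<in> tilde_reps X n"
  by (simp add: simp_copr_sset)

lemma sum_act_Inl: "sum_act A B m n \<theta> (Inl a) = Inl (act A m n \<theta> a)"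
  by (simp add: sum_act_def)

lemma sum_act_copr_J_Inr: "sum_act A (copr_sset I J_sset) m n \<theta> (Inr (\<sigma>, s)) = Inr (\<sigma>, pull m \<theta> s)"
  by (simp add: sum_act_def act_copr_sset act_J_sset)

lemma tilde_act_tilde_reps:
  assumes X: "is_sset X" and "dmor m n \<theta>" and "z \<in> tilde_reps X n"
  shows "tilde_act X m n \<theta> z \<in> tilde_reps X m"
  using assms sset_act_closed[OF X] pull_J_sset
  by (auto simp: sum_act_Inl sum_act_copr_J_Inr simp_copr_sset Plus_def)

lemma tilde_act_tilde_rel:
  assumes X: "is_sset X" and \<theta>: "dmor m n \<theta>" and "(z, z') \<in> tilde_rel X n"
  shows "(tilde_act X m n \<theta> z, tilde_act X m n \<theta> z') \<in> tilde_rel X m"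
  using assms(3) unfolding tilde_rel_eq
proof (rule equiv_closure_on_map[rotated 2])
  show "tilde_act X m n \<theta> ` tilde_reps X n \<subseteq> tilde_reps X m"
    using tilde_act_tilde_reps[OF X \<theta>] by blast
  fix p q assume "(p, q) \<in> tilde_glue X n"
  then obtain \<sigma> s where pq: "p = Inl (act X n 1 s \<sigma>)" "q = Inr (\<sigma>, s)"
    and \<sigma>: "\<sigma> \<in> simp X 1" and s: "s \<in> simp Delta1_sset n"
    unfolding tilde_glue_def by blast
  have "tilde_act X m n \<theta> p = Inl (act X m 1 (pull m \<theta> s) \<sigma>)"
    using act_pull[OF X \<theta> _ \<sigma>] s by (simp add: pq sum_act_Inl simp_Delta1_sset)
  moreover have "tilde_act X m n \<theta> q = Inr (\<sigma>, pull m \<theta> s)"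
    by (simp add: pq sum_act_copr_J_Inr)
  ultimately show "(tilde_act X m n \<theta> p, tilde_act X m n \<theta> q) \<in> tilde_glue X m"
    using pull_Delta1_sset[OF \<theta> s] \<sigma> unfolding tilde_glue_def by blast
qed

lemma simp_tildeX: "simp (tildeX X) n = tilde_reps X n // tilde_rel X n"
  unfolding tildeX_def sset_pushout_def tilde_rel_def by simp

lemma tilde_class_in_simp: "z \<in> tilde_reps X n \<Longrightarrow> tilde_class X n z \<in> simp (tildeX X) n"
  unfolding simp_tildeX tilde_class_def by (rule quotientI)

lemma tilde_classE:
  assumes "c \<in> simp (tildeX X) n"
  obtains z where "z \<in> tilde_reps X n" "c = tilde_class X n z"
  using assms unfolding simp_tildeX tilde_class_def by (rule quotientE)

lemma tilde_class_eqI: "(z, z') \<in> tilde_rel X n \<Longrightarrow> tilde_class X n z = tilde_class X n z'"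
  unfolding tilde_class_def by (rule equiv_class_eq[OF equiv_tilde_rel])

lemma some_tilde_class: "z \<in> tilde_reps X n \<Longrightarrow> (z, SOME z'. z' \<in> tilde_class X n z) \<in> tilde_rel X n"
  unfolding tilde_class_def by (rule equiv_some_in_class[OF equiv_tilde_rel])

lemma act_tilde_class:
  assumes X: "is_sset X" and \<theta>: "dmor m n \<theta>" and z: "z \<in> tilde_reps X n"
  shows "act (tildeX X) m n \<theta> (tilde_class X n z) = tilde_class X m (tilde_act X m n \<theta> z)"
proof -
  have "tilde_class X m (tilde_act X m n \<theta> z) =
      tilde_class X m (tilde_act X m n \<theta> (SOME z'. z' \<in> tilde_class X n z))"
    by (rule tilde_class_eqI[OF tilde_act_tilde_rel[OF X \<theta> some_tilde_class[OF z]]])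
  then show ?thesis
    unfolding tildeX_def sset_pushout_def by (simp add: tilde_class_def tilde_rel_def)
qed

lemma act_tilde_class_Inr:
  assumes X: "is_sset X" and "dmor m n \<theta>" "\<sigma> \<in> simp X 1" "s \<in> simp J_sset n"
  shows "act (tildeX X) m n \<theta> (tilde_class X n (Inr (\<sigma>, s))) = tilde_class X m (Inr (\<sigma>, pull m \<theta> s))"
  using act_tilde_class[OF X assms(2) Inr_in_tilde_reps[OF assms(3,4)]] by (simp add: sum_act_copr_J_Inr)

lemma act_tilde_class_Inl:
  assumes X: "is_sset X" and "dmor m n \<theta>" "x \<in> simp X n"
  shows "act (tildeX X) m n \<theta> (tilde_class X n (Inl x)) = tilde_class X m (Inl (act X m n \<theta> x))"
  using act_tilde_class[OF X assms(2)] assms(3) by (simp add: sum_act_Inl)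

lemma tilde_class_glue:
  assumes X: "is_sset X" and "\<sigma> \<in> simp X 1" "s \<in> simp Delta1_sset n"
  shows "tilde_class X n (Inr (\<sigma>, s)) = tilde_class X n (Inl (act X n 1 s \<sigma>))"
proof (rule tilde_class_eqI)
  have "act X n 1 s \<sigma> \<in> simp X n" using assms sset_act_closed[OF X] by (simp add: simp_Delta1_sset)
  then have "(Inl (act X n 1 s \<sigma>), Inr (\<sigma>, s)) \<in> tilde_rel X n"
    unfolding tilde_rel_eq tilde_glue_def using assms Delta1_sset_subset_J_sset
    by (intro equiv_closure_onI) (auto simp: simp_copr_sset)
  then show "(Inr (\<sigma>, s), Inl (act X n 1 s \<sigma>)) \<in> tilde_rel X n"
    using equiv_tilde_rel by (blast elim: equivE symE)
qed

lemma tilde_incl_eq: "tilde_incl X n x = tilde_class X n (Inl x)"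
  unfolding tilde_incl_def po_inl_def tilde_class_def tilde_rel_def ..

lemma sset_map_tilde_incl:
  assumes X: "is_sset X"
  shows "sset_map X (tildeX X) (tilde_incl X)"
  unfolding sset_map_def tilde_incl_eq
proof (intro conjI allI impI)
  show "tilde_class X n (Inl x) \<in> simp (tildeX X) n" if "x \<in> simp X n" for n x
    using that by (simp add: tilde_class_in_simp)
  show "tilde_class X m (Inl (act X m n \<theta> x)) = act (tildeX X) m n \<theta> (tilde_class X n (Inl x))"
    if "dmor m n \<theta>" "x \<in> simp X n" for m n \<theta> x
    using act_tilde_class_Inl[OF X that] by simp
qed

lemma sset_mono_tilde_incl:
  assumes X: "is_sset X"
  shows "sset_mono X (tildeX X) (tilde_incl X)"
  unfolding sset_mono_def
proof (intro conjI allI sset_map_tilde_incl[OF X] inj_onI)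
  fix n x y
  let ?classify = "\<lambda>z. case z of Inl x \<Rightarrow> x | Inr (\<sigma>, s) \<Rightarrow> act X n 1 s \<sigma>"
  assume "x \<in> simp X n" "y \<in> simp X n" "tilde_incl X n x = tilde_incl X n y"
  then have "(Inl x, Inl y) \<in> tilde_rel X n"
    unfolding tilde_incl_eq tilde_class_def using equiv_class_self[OF equiv_tilde_rel] by blast
  then have "?classify (Inl x) = ?classify (Inl y)"
    by (rule tilde_rel_invariant[rotated]) simp
  then show "x = y" by simp
qed

section \<open>The homotopy category of \<open>X\<^sup>~\<close>\<close>

lemma is_path_start: "is_path X x p y \<Longrightarrow> x \<in> simp X 0"
  by (cases p) auto

lemma is_path_append: "is_path X x p y \<Longrightarrow> is_path X y q z \<Longrightarrow> is_path X x (p @ q) z"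
  by (induction p arbitrary: x) auto

lemma hocat_is_groupoidI:
  assumes edge_inverse: "\<And>e. e \<in> simp Y 1 \<Longrightarrow> \<exists>e'. is_path Y (tgt1 Y e) [e'] (src1 Y e) \<and>
      hrel Y (src1 Y e) (src1 Y e) [e, e'] [] \<and> hrel Y (tgt1 Y e) (tgt1 Y e) [e', e] []"
  shows "hocat_is_groupoid Y"
  unfolding hocat_is_groupoid_def
proof (intro allI impI)
  fix x p y assume "is_path Y x p y"
  then show "\<exists>q. is_path Y y q x \<and> hrel Y x x (p @ q) [] \<and> hrel Y y y (q @ p) []"
  proof (induction p arbitrary: x)
    case Nil
    then show ?case by (auto intro!: exI[of _ "[]"] hrefl)
  next
    case (Cons e p)
    then have e: "e \<in> simp Y 1" "src1 Y e = x" "x \<in> simp Y 0" and p: "is_path Y (tgt1 Y e) p y"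
      by auto
    obtain q where q: "is_path Y y q (tgt1 Y e)" "hrel Y (tgt1 Y e) (tgt1 Y e) (p @ q) []"
      "hrel Y y y (q @ p) []"
      using Cons.IH[OF p] by blast
    obtain e' where e': "is_path Y (tgt1 Y e) [e'] x" "hrel Y x x [e, e'] []"
      "hrel Y (tgt1 Y e) (tgt1 Y e) [e', e] []"
      using edge_inverse[OF e(1)] e(2) by blast
    have "is_path Y x [e] (tgt1 Y e)" using e is_path_start[OF p] by simp
    from hcong[OF q(2) this e'(1)] have "hrel Y x x ((e # p) @ q @ [e']) [e, e']" by simp
    moreover from hcong[OF e'(3) q(1) p] have "hrel Y y y ((q @ [e']) @ e # p) (q @ p)" by simp
    ultimately show ?case
      using is_path_append[OF q(1) e'(1)] e'(2) q(3) by (blast intro: htrans)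
  qed
qed

definition J_vertex :: "nat \<Rightarrow> nat \<Rightarrow> nat" where
  "J_vertex a = (\<lambda>i. if i = 0 then a else 0)"

definition J_edge :: "nat \<Rightarrow> nat \<Rightarrow> nat \<Rightarrow> nat" where
  "J_edge a b = (\<lambda>i. if i = 0 then a else if i = 1 then b else 0)"

definition J_triangle :: "nat \<Rightarrow> nat \<Rightarrow> nat \<Rightarrow> nat \<Rightarrow> nat" where
  "J_triangle a b c = (\<lambda>i. if i = 0 then a else if i = 1 then b else if i = 2 then c else 0)"

lemma dmor_const: "k \<le> n \<Longrightarrow> dmor 0 n (\<lambda>_. k)"
  by (simp add: dmor_def)

lemma dmor_degen: "dmor 1 0 (\<lambda>_. 0)"
  by (simp add: dmor_def)

lemma dmor_face: "k \<le> 2 \<Longrightarrow> dmor 1 2 (\<lambda>j. if j < k then j else j + 1)"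
  by (auto simp: dmor_def)

lemma J_vertex_J_sset: "a \<le> 1 \<Longrightarrow> J_vertex a \<in> simp J_sset 0"
  by (simp add: simp_J_sset J_vertex_def)

lemma J_edge_J_sset: "a \<le> 1 \<Longrightarrow> b \<le> 1 \<Longrightarrow> J_edge a b \<in> simp J_sset 1"
  by (simp add: simp_J_sset J_edge_def)

lemma J_triangle_J_sset: "a \<le> 1 \<Longrightarrow> b \<le> 1 \<Longrightarrow> c \<le> 1 \<Longrightarrow> J_triangle a b c \<in> simp J_sset 2"
  by (simp add: simp_J_sset J_triangle_def)

lemma J_sset_1_eq_J_edge: "s \<in> simp J_sset 1 \<Longrightarrow> s = J_edge (s 0) (s 1) \<and> s 0 \<le> 1 \<and> s 1 \<le> 1"
  by (auto simp: simp_J_sset J_edge_def)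

abbreviation tilde_vertex :: "'a sset \<Rightarrow> 'a \<Rightarrow> nat \<Rightarrow> ('a + 'a \<times> (nat \<Rightarrow> nat)) set" where
  "tilde_vertex X \<sigma> a \<equiv> tilde_class X 0 (Inr (\<sigma>, J_vertex a))"

abbreviation tilde_edge :: "'a sset \<Rightarrow> 'a \<Rightarrow> nat \<Rightarrow> nat \<Rightarrow> ('a + 'a \<times> (nat \<Rightarrow> nat)) set" where
  "tilde_edge X \<sigma> a b \<equiv> tilde_class X 1 (Inr (\<sigma>, J_edge a b))"

context
  fixes X :: "'a sset"
  assumes X: "is_sset X"
begin

lemma tilde_edge_0_1:
  assumes "\<sigma> \<in> simp X 1"
  shows "tilde_edge X \<sigma> 0 1 = tilde_class X 1 (Inl \<sigma>)"
proof -
  have "J_edge 0 1 \<in> simp Delta1_sset 1" by (auto simp: simp_Delta1_sset dmor_def J_edge_def)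
  moreover have "act X 1 1 (J_edge 0 1) \<sigma> = \<sigma>"
    using sset_act_cong[OF X, of 1 "J_edge 0 1" id] sset_act_id[OF X assms] by (simp add: J_edge_def)
  ultimately show ?thesis using tilde_class_glue[OF X assms] by simp
qed

lemma tilde_edge_cases:
  assumes "e \<in> simp (tildeX X) 1"
  obtains \<sigma> a b where "\<sigma> \<in> simp X 1" "a \<le> 1" "b \<le> 1" "e = tilde_edge X \<sigma> a b"
proof -
  obtain z where z: "z \<in> tilde_reps X 1" "e = tilde_class X 1 z"
    using assms by (rule tilde_classE)
  show ?thesis
  proof (cases z)
    case (Inl \<sigma>)
    then show ?thesis using that[of \<sigma> 0 1] z tilde_edge_0_1 by simp
  next
    case (Inr p)
    then obtain \<sigma> s where "z = Inr (\<sigma>, s)" "\<sigma> \<in> simp X 1" "s \<in> simp J_sset 1"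
      using z(1) by (cases p) (auto simp: simp_copr_sset)
    then show ?thesis using that[of \<sigma> "s 0" "s 1"] z J_sset_1_eq_J_edge by metis
  qed
qed

context
  fixes \<sigma> assumes \<sigma>: "\<sigma> \<in> simp X 1"
begin

lemma tilde_vertex_in_simp: "a \<le> 1 \<Longrightarrow> tilde_vertex X \<sigma> a \<in> simp (tildeX X) 0"
  by (rule tilde_class_in_simp[OF Inr_in_tilde_reps[OF \<sigma> J_vertex_J_sset]])

lemma tilde_edge_in_simp: "a \<le> 1 \<Longrightarrow> b \<le> 1 \<Longrightarrow> tilde_edge X \<sigma> a b \<in> simp (tildeX X) 1"
  by (rule tilde_class_in_simp[OF Inr_in_tilde_reps[OF \<sigma> J_edge_J_sset]])

lemma
  assumes "a \<le> 1" "b \<le> 1"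
  shows src1_tilde_edge: "src1 (tildeX X) (tilde_edge X \<sigma> a b) = tilde_vertex X \<sigma> a"
    and tgt1_tilde_edge: "tgt1 (tildeX X) (tilde_edge X \<sigma> a b) = tilde_vertex X \<sigma> b"
proof -
  have "pull 0 (\<lambda>_. 0) (J_edge a b) = J_vertex a" "pull 0 (\<lambda>_. 1) (J_edge a b) = J_vertex b"
    by (auto simp: pull_def J_edge_def J_vertex_def)
  then show "src1 (tildeX X) (tilde_edge X \<sigma> a b) = tilde_vertex X \<sigma> a"
    and "tgt1 (tildeX X) (tilde_edge X \<sigma> a b) = tilde_vertex X \<sigma> b"
    unfolding src1_def tgt1_def
    using act_tilde_class_Inr[OF X dmor_const \<sigma> J_edge_J_sset[OF assms]] by simp_all
qed

lemma degen0_tilde_vertex: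
  assumes "a \<le> 1"
  shows "degen0 (tildeX X) (tilde_vertex X \<sigma> a) = tilde_edge X \<sigma> a a"
proof -
  have "pull 1 (\<lambda>_. 0) (J_vertex a) = J_edge a a" by (auto simp: pull_def J_edge_def J_vertex_def)
  then show ?thesis
    unfolding degen0_def act_tilde_class_Inr[OF X dmor_degen \<sigma> J_vertex_J_sset[OF assms]] by simp
qed

lemma hrel_tilde_triangle:
  assumes abc: "a \<le> 1" "b \<le> 1" "c \<le> 1"
  shows "hrel (tildeX X) (tilde_vertex X \<sigma> a) (tilde_vertex X \<sigma> c)
      [tilde_edge X \<sigma> a c] [tilde_edge X \<sigma> a b, tilde_edge X \<sigma> b c]"
proof -
  let ?t = "tilde_class X 2 (Inr (\<sigma>, J_triangle a b c))"
  have act: "act (tildeX X) m 2 \<theta> ?t = tilde_class X m (Inr (\<sigma>, pull m \<theta> (J_triangle a b c)))"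
    if "dmor m 2 \<theta>" for m \<theta>
    by (rule act_tilde_class_Inr[OF X that \<sigma> J_triangle_J_sset[OF abc]])
  have face: "face2 (tildeX X) k ?t = tilde_class X 1 (Inr (\<sigma>, pull 1 (\<lambda>j. if j < k then j else j + 1) (J_triangle a b c)))"
    if "k \<le> 2" for k
    unfolding face2_def using dmor_face[OF that] by (rule act)
  have vert: "vert2 (tildeX X) k ?t = tilde_class X 0 (Inr (\<sigma>, pull 0 (\<lambda>_. k) (J_triangle a b c)))"
    if "k \<le> 2" for k
    unfolding vert2_def using dmor_const[OF that] by (rule act)
  have "pull 1 (\<lambda>j. if j < 0 then j else j + 1) (J_triangle a b c) = J_edge b c"
    "pull 1 (\<lambda>j. if j < 1 then j else j + 1) (J_triangle a b c) = J_edge a c"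
    "pull 1 (\<lambda>j. if j < 2 then j else j + 1) (J_triangle a b c) = J_edge a b"
    "pull 0 (\<lambda>_. 0) (J_triangle a b c) = J_vertex a" "pull 0 (\<lambda>_. 2) (J_triangle a b c) = J_vertex c"
    by (auto simp: pull_def J_edge_def J_vertex_def J_triangle_def)
  with face[of 0] face[of 1] face[of 2] vert[of 0] vert[of 2]
  show ?thesis
    using htri[OF tilde_class_in_simp[OF Inr_in_tilde_reps[OF \<sigma> J_triangle_J_sset[OF abc]]]] by simp
qed

lemma hrel_tilde_edge_inverse:
  assumes ab: "a \<le> 1" "b \<le> 1"
  shows "hrel (tildeX X) (tilde_vertex X \<sigma> a) (tilde_vertex X \<sigma> a) [tilde_edge X \<sigma> a b, tilde_edge X \<sigma> b a] []"
proof -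
  have "hrel (tildeX X) (tilde_vertex X \<sigma> a) (tilde_vertex X \<sigma> a) [tilde_edge X \<sigma> a a] []"
    using hdeg[OF tilde_vertex_in_simp[OF ab(1)]] unfolding degen0_tilde_vertex[OF ab(1)] .
  then show ?thesis by (rule htrans[OF hsym[OF hrel_tilde_triangle[OF ab(1,2,1)]]])
qed

end

lemma hocat_is_groupoid_tildeX: "hocat_is_groupoid (tildeX X)"
proof (rule hocat_is_groupoidI)
  fix e assume "e \<in> simp (tildeX X) 1"
  then obtain \<sigma> a b where \<sigma>: "\<sigma> \<in> simp X 1" and ab: "a \<le> 1" "b \<le> 1" and e: "e = tilde_edge X \<sigma> a b"
    by (rule tilde_edge_cases)
  have src: "src1 (tildeX X) e = tilde_vertex X \<sigma> a" and tgt: "tgt1 (tildeX X) e = tilde_vertex X \<sigma> b"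
    unfolding e by (rule src1_tilde_edge[OF \<sigma> ab], rule tgt1_tilde_edge[OF \<sigma> ab])
  have "is_path (tildeX X) (tilde_vertex X \<sigma> b) [tilde_edge X \<sigma> b a] (tilde_vertex X \<sigma> a)"
    unfolding is_path.simps src1_tilde_edge[OF \<sigma> ab(2,1)] tgt1_tilde_edge[OF \<sigma> ab(2,1)]
    using tilde_edge_in_simp[OF \<sigma> ab(2,1)] tilde_vertex_in_simp[OF \<sigma>] ab by blast
  then show "\<exists>e'. is_path (tildeX X) (tgt1 (tildeX X) e) [e'] (src1 (tildeX X) e) \<and>
      hrel (tildeX X) (src1 (tildeX X) e) (src1 (tildeX X) e) [e, e'] [] \<and>
      hrel (tildeX X) (tgt1 (tildeX X) e) (tgt1 (tildeX X) e) [e', e] []"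
    unfolding src tgt unfolding e using hrel_tilde_edge_inverse[OF \<sigma> ab] hrel_tilde_edge_inverse[OF \<sigma> ab(2,1)]
    by blast
qed

end

section \<open>The cone deformation\<close>

definition weight_j0 :: "nat \<Rightarrow> (nat \<Rightarrow> nat) \<Rightarrow> (nat \<Rightarrow> real) \<Rightarrow> real" where
  "weight_j0 n s u = sum u {i. i \<le> n \<and> s i = 0}"

definition cone_seq :: "nat \<Rightarrow> (nat \<Rightarrow> nat) \<Rightarrow> nat \<Rightarrow> nat" where
  "cone_seq n s = (\<lambda>i. if i = 0 then 0 else if i \<le> Suc n then s (i - 1)
      else if i = Suc (Suc n) then 1 else 0)"

definition cone_coords :: "real \<Rightarrow> nat \<Rightarrow> (nat \<Rightarrow> nat) \<Rightarrow> (nat \<Rightarrow> real) \<Rightarrow> nat \<Rightarrow> real" where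
  "cone_coords \<tau> n s u = (\<lambda>j. if j = 0 then \<tau> * weight_j0 n s u else if j \<le> Suc n then (1 - \<tau>) * u (j - 1)
      else if j = Suc (Suc n) then \<tau> * (1 - weight_j0 n s u) else 0)"

definition edge_coords :: "real \<Rightarrow> nat \<Rightarrow> real" where
  "edge_coords a = (\<lambda>j. if j = 0 then a else if j = 1 then 1 - a else 0)"

definition cone_mor :: "nat \<Rightarrow> nat \<Rightarrow> (nat \<Rightarrow> nat) \<Rightarrow> nat \<Rightarrow> nat" where
  "cone_mor m n \<theta> = (\<lambda>i. if i = 0 then 0 else if i \<le> Suc m then Suc (\<theta> (i - 1)) else Suc (Suc n))"

definition cone_ends :: "nat \<Rightarrow> nat \<Rightarrow> nat" where
  "cone_ends n = (\<lambda>i. if i = 0 then 0 else Suc (Suc n))"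

lemma weight_j0_bounds:
  assumes u: "u \<in> std_simplex n"
  shows "0 \<le> weight_j0 n s u" "weight_j0 n s u \<le> 1"
proof -
  show "0 \<le> weight_j0 n s u"
    unfolding weight_j0_def using std_simplex_nonneg[OF u] by (simp add: sum_nonneg)
  have "weight_j0 n s u \<le> sum u {..n}"
    unfolding weight_j0_def by (rule sum_mono2) (auto simp: std_simplex_nonneg[OF u])
  then show "weight_j0 n s u \<le> 1" using std_simplex_sum[OF u] by simp
qed

lemma cone_coords_std_simplex:
  assumes \<tau>: "\<tau> \<in> {0..1}" and u: "u \<in> std_simplex n"
  shows "cone_coords \<tau> n s u \<in> std_simplex (Suc (Suc n))"
proof (rule std_simplexI)
  show "0 \<le> cone_coords \<tau> n s u j" for j
    using \<tau> weight_j0_bounds[OF u, of s] std_simplex_nonneg[OF u] by (auto simp: cone_coords_def)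
  show "cone_coords \<tau> n s u j = 0" if "Suc (Suc n) < j" for j
    using that by (simp add: cone_coords_def)
  have "{..Suc (Suc n)} = {i. i \<le> Suc (Suc n) \<and> True}" "{..n} = {i. i \<le> n \<and> True}"
    by auto
  then have "sum (cone_coords \<tau> n s u) {..Suc (Suc n)} =
      \<tau> * weight_j0 n s u + (1 - \<tau>) * sum u {..n} + \<tau> * (1 - weight_j0 n s u)"
    by (simp only: sum_split_ends) (simp add: cone_coords_def sum_distrib_left)
  then show "sum (cone_coords \<tau> n s u) {..Suc (Suc n)} = 1"
    using std_simplex_sum[OF u] by (simp add: algebra_simps)
qed

lemma edge_coords_std_simplex: "0 \<le> a \<Longrightarrow> a \<le> 1 \<Longrightarrow> edge_coords a \<in> std_simplex 1"
  by (rule std_simplexI) (auto simp: edge_coords_def)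

lemma cone_seq_J_sset: "s \<in> simp J_sset n \<Longrightarrow> cone_seq n s \<in> simp J_sset (Suc (Suc n))"
  unfolding simp_J_sset cone_seq_def by auto

lemma cone_seq_Delta1_sset:
  "s \<in> simp Delta1_sset n \<Longrightarrow> cone_seq n s \<in> simp Delta1_sset (Suc (Suc n))"
  unfolding simp_Delta1_sset dmor_def cone_seq_def by (auto simp: not_le)

lemma dmor_cone_mor: assumes th: "dmor m n \<theta>" shows "dmor (Suc (Suc m)) (Suc (Suc n)) (cone_mor m n \<theta>)"
proof -
  have le0: "\<And>i. i \<le> m \<Longrightarrow> \<theta> i \<le> n" and mono0: "\<And>i j. i \<le> j \<Longrightarrow> j \<le> m \<Longrightarrow> \<theta> i \<le> \<theta> j"
    using th unfolding dmor_def by auto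
  have b1: "cone_mor m n \<theta> i \<le> Suc (Suc n)" if "i \<le> Suc (Suc m)" for i
  proof (cases "i = 0")
    case False
    show ?thesis
    proof (cases "i \<le> Suc m")
      case True
      then have "i - 1 \<le> m" by simp
      then have "\<theta> (i - 1) \<le> n" by (rule le0)
      then show ?thesis using True False by (simp add: cone_mor_def)
    qed (simp add: cone_mor_def)
  qed (simp add: cone_mor_def)
  have b2: "cone_mor m n \<theta> i \<le> cone_mor m n \<theta> j" if ij: "i \<le> j" "j \<le> Suc (Suc m)" for i j
  proof (cases "i = 0")
    case False
    then have j0: "j \<noteq> 0" using ij by simp
    show ?thesis
    proof (cases "j \<le> Suc m")
      case True
      then have "i - 1 \<le> j - 1" "j - 1 \<le> m" using ij by simp_all
      then have "\<theta> (i - 1) \<le> \<theta> (j - 1)" by (rule mono0)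
      then show ?thesis using True False j0 ij by (simp add: cone_mor_def)
    next
      case False
      then have "cone_mor m n \<theta> j = Suc (Suc n)" using j0 by (simp add: cone_mor_def)
      then show ?thesis using b1[of i] ij by simp
    qed
  qed (simp add: cone_mor_def)
  show ?thesis unfolding dmor_def using b1 b2 by blast
qed

lemma pull_cone_mor:
  assumes "dmor m n \<theta>"
  shows "pull (Suc (Suc m)) (cone_mor m n \<theta>) (cone_seq n s) = cone_seq m (pull m \<theta> s)"
proof
  fix i
  show "pull (Suc (Suc m)) (cone_mor m n \<theta>) (cone_seq n s) i = cone_seq m (pull m \<theta> s) i"
    using assms unfolding pull_def cone_mor_def cone_seq_def dmor_def
    by (cases "i = 0"; cases "i \<le> Suc m"; cases "i = Suc (Suc m)") auto
qed

lemma weight_j0_pull: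
  assumes "dmor m n \<theta>"
  shows "weight_j0 m (pull m \<theta> s) t = weight_j0 n s (simplex_push m \<theta> t)"
proof -
  have "{i. i \<le> m \<and> pull m \<theta> s i = 0} = {i. i \<le> m \<and> s (\<theta> i) = 0}"
    by (auto simp: pull_def)
  then show ?thesis
    unfolding weight_j0_def sum_simplex_push[OF assms] by simp
qed

lemma simplex_push_cone_mor: assumes th: "dmor m n \<theta>"
  shows "simplex_push (Suc (Suc m)) (cone_mor m n \<theta>) (cone_coords \<tau> m (pull m \<theta> s) t) = cone_coords \<tau> n s (simplex_push m \<theta> t)"
proof
  fix j
  let ?W = "cone_coords \<tau> m (pull m \<theta> s) t" and ?A = "weight_j0 n s (simplex_push m \<theta> t)"
  have A: "weight_j0 m (pull m \<theta> s) t = ?A" by (rule weight_j0_pull[OF th])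
  have th_le: "i \<le> m \<Longrightarrow> \<theta> i \<le> n" for i using th unfolding dmor_def by auto
  have mid: "sum (\<lambda>i. ?W (Suc i)) {i. i \<le> m \<and> cone_mor m n \<theta> (Suc i) = j}
      = (1 - \<tau>) * sum t {i. i \<le> m \<and> Suc (\<theta> i) = j}"
  proof -
    have "{i. i \<le> m \<and> cone_mor m n \<theta> (Suc i) = j} = {i. i \<le> m \<and> Suc (\<theta> i) = j}"
      by (auto simp: cone_mor_def)
    moreover have "sum (\<lambda>i. ?W (Suc i)) {i. i \<le> m \<and> Suc (\<theta> i) = j} = sum (\<lambda>i. (1 - \<tau>) * t i) {i. i \<le> m \<and> Suc (\<theta> i) = j}"
      by (rule sum.cong) (auto simp: cone_coords_def)
    ultimately show ?thesis by (simp add: sum_distrib_left)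
  qed
  have "simplex_push (Suc (Suc m)) (cone_mor m n \<theta>) ?W j =
     (if cone_mor m n \<theta> 0 = j then ?W 0 else 0) + sum (\<lambda>i. ?W (Suc i)) {i. i \<le> m \<and> cone_mor m n \<theta> (Suc i) = j}
     + (if cone_mor m n \<theta> (Suc (Suc m)) = j then ?W (Suc (Suc m)) else 0)"
    unfolding simplex_push_def by (rule sum_split_ends)
  also have "\<dots> = (if 0 = j then \<tau> * ?A else 0) + (1 - \<tau>) * sum t {i. i \<le> m \<and> Suc (\<theta> i) = j}
     + (if Suc (Suc n) = j then \<tau> * (1 - ?A) else 0)"
    unfolding mid A[symmetric] by (simp add: cone_mor_def cone_coords_def)
  also have "\<dots> = cone_coords \<tau> n s (simplex_push m \<theta> t) j"
  proof (cases "j = 0")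
    case True then show ?thesis by (simp add: cone_coords_def)
  next
    case False
    then obtain k where k: "j = Suc k" by (cases j) auto
    show ?thesis
    proof (cases "k \<le> n")
      case True
      then have e: "{i. i \<le> m \<and> Suc (\<theta> i) = j} = {i. i \<le> m \<and> \<theta> i = k}" using k by auto
      show ?thesis unfolding e using True k by (simp add: cone_coords_def simplex_push_def)
    next
      case False
      then have e: "{i. i \<le> m \<and> Suc (\<theta> i) = j} = {}" using k th_le by fastforce
      have z: "sum t {i. i \<le> m \<and> Suc (\<theta> i) = j} = 0" unfolding e by simp
      show ?thesis unfolding z using False k by (simp add: cone_coords_def)
    qed
  qed
  finally show "simplex_push (Suc (Suc m)) (cone_mor m n \<theta>) ?W j = cone_coords \<tau> n s (simplex_push m \<theta> t) j" .
qed

lemma dmor_Suc: "dmor n (Suc (Suc n)) Suc"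
  by (simp add: dmor_def)

lemma pull_Suc_cone_seq: "s \<in> simp J_sset n \<Longrightarrow> pull n Suc (cone_seq n s) = s"
  unfolding simp_J_sset pull_def cone_seq_def by fastforce

lemma simplex_push_Suc: "simplex_push n Suc u = cone_coords 0 n s u"
proof
  fix j
  have "{i. i \<le> n \<and> Suc i = j} = (if j = 0 \<or> Suc n < j then {} else {j - 1})"
    by auto
  then show "simplex_push n Suc u j = cone_coords 0 n s u j"
    by (simp add: simplex_push_def cone_coords_def)
qed

lemma dmor_cone_ends: "dmor 1 (Suc (Suc n)) (cone_ends n)"
  by (simp add: dmor_def cone_ends_def)

lemma pull_cone_ends: "pull 1 (cone_ends n) (cone_seq n s) = J_edge 0 1"
  by (auto simp: pull_def cone_ends_def cone_seq_def J_edge_def)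

lemma simplex_push_cone_ends:
  "simplex_push 1 (cone_ends n) (edge_coords (weight_j0 n s u)) = cone_coords 1 n s u"
proof
  fix j
  have "{i. i \<le> 1 \<and> cone_ends n i = j} = (if j = 0 then {0} else if j = Suc (Suc n) then {1} else {})"
    by (auto simp: cone_ends_def)
  then show "simplex_push 1 (cone_ends n) (edge_coords (weight_j0 n s u)) j = cone_coords 1 n s u j"
    unfolding simplex_push_def by (simp add: edge_coords_def cone_coords_def)
qed

lemma simplex_push_Delta1:
  assumes s: "s \<in> simp Delta1_sset n" and u: "u \<in> std_simplex n"
  shows "simplex_push n s u = edge_coords (weight_j0 n s u)"
proof (rule std_simplex_1_eqI)
  show "simplex_push n s u \<in> std_simplex 1"
    using s u by (intro simplex_push_std_simplex) (simp_all add: simp_Delta1_sset)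
  show "edge_coords (weight_j0 n s u) \<in> std_simplex 1"
    using weight_j0_bounds[OF u] by (rule edge_coords_std_simplex)
qed (simp add: simplex_push_def edge_coords_def weight_j0_def)

lemma simplex_push_cone_seq:
  assumes s: "s \<in> simp Delta1_sset n" and u: "u \<in> std_simplex n" and \<tau>: "\<tau> \<in> {0..1}"
  shows "simplex_push (Suc (Suc n)) (cone_seq n s) (cone_coords \<tau> n s u) = edge_coords (weight_j0 n s u)"
proof (rule std_simplex_1_eqI)
  show "simplex_push (Suc (Suc n)) (cone_seq n s) (cone_coords \<tau> n s u) \<in> std_simplex 1"
    using cone_seq_Delta1_sset[OF s] cone_coords_std_simplex[OF \<tau> u]
    by (intro simplex_push_std_simplex) (simp_all add: simp_Delta1_sset)
  show "edge_coords (weight_j0 n s u) \<in> std_simplex 1"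
    using weight_j0_bounds[OF u] by (rule edge_coords_std_simplex)
  have set: "{i. i \<le> n \<and> cone_seq n s (Suc i) = 0} = {i. i \<le> n \<and> s i = 0}"
    by (auto simp: cone_seq_def)
  have "sum (\<lambda>i. cone_coords \<tau> n s u (Suc i)) {i. i \<le> n \<and> cone_seq n s (Suc i) = 0} =
      (1 - \<tau>) * weight_j0 n s u"
    unfolding set weight_j0_def sum_distrib_left by (intro sum.cong refl) (auto simp: cone_coords_def)
  then show "simplex_push (Suc (Suc n)) (cone_seq n s) (cone_coords \<tau> n s u) 0 = edge_coords (weight_j0 n s u) 0"
    unfolding simplex_push_def sum_split_ends by (simp add: cone_coords_def cone_seq_def edge_coords_def algebra_simps)
qed

lemma tilde_reps_cases [consumes 1, case_names Inl Inr]: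
  assumes "z \<in> tilde_reps X n"
  obtains (Inl) x where "z = Inl x" "x \<in> simp X n"
    | (Inr) \<sigma> s where "z = Inr (\<sigma>, s)" "\<sigma> \<in> simp X 1" "s \<in> simp J_sset n"
  using assms by (auto simp: simp_copr_sset Plus_def)

lemma continuous_map_simplex_coord: "continuous_map (simplex_top n) euclideanreal (\<lambda>u. u i)"
  by (intro continuous_map_from_subtopology continuous_map_product_projection) simp

lemma continuous_map_weight_j0: "continuous_map (simplex_top n) euclideanreal (weight_j0 n s)"
  unfolding weight_j0_def by (intro continuous_map_sum continuous_map_simplex_coord) auto

lemma continuous_map_into_simplex_top:
  assumes "\<And>k. continuous_map Z euclideanreal (\<lambda>z. F z k)" and "\<And>z. z \<in> topspace Z \<Longrightarrow> F z \<in> std_simplex n"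
  shows "continuous_map Z (simplex_top n) F"
  unfolding continuous_map_in_subtopology continuous_map_componentwise_UNIV using assms by auto

lemma continuous_map_cone_coords:
  "continuous_map (prod_topology unit_interval (simplex_top n)) (simplex_top (Suc (Suc n)))
     (\<lambda>p. cone_coords (fst p) n s (snd p))"
proof (rule continuous_map_into_simplex_top)
  let ?Z = "prod_topology unit_interval (simplex_top n)"
  have \<tau>: "continuous_map ?Z euclideanreal fst"
    using continuous_map_fst continuous_map_in_subtopology by blast
  have u: "continuous_map ?Z euclideanreal (\<lambda>p. snd p i)" for i
    using continuous_map_compose[OF continuous_map_snd continuous_map_simplex_coord] by (simp add: o_def)
  have w: "continuous_map ?Z euclideanreal (\<lambda>p. weight_j0 n s (snd p))"
    using continuous_map_compose[OF continuous_map_snd continuous_map_weight_j0] by (simp add: o_def)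
  show "continuous_map ?Z euclideanreal (\<lambda>p. cone_coords (fst p) n s (snd p) k)" for k
    unfolding cone_coords_def
    by (cases "k = 0"; cases "k \<le> Suc n"; cases "k = Suc (Suc n)")
      (simp_all add: \<tau> u w continuous_map_real_mult continuous_map_diff)
  show "cone_coords (fst p) n s (snd p) \<in> std_simplex (Suc (Suc n))" if "p \<in> topspace ?Z" for p
    using that by (cases p) (simp add: cone_coords_std_simplex)
qed

lemma continuous_map_edge_coords_weight_j0:
  "continuous_map (simplex_top n) (simplex_top 1) (\<lambda>u. edge_coords (weight_j0 n s u))"
proof (rule continuous_map_into_simplex_top)
  show "continuous_map (simplex_top n) euclideanreal (\<lambda>u. edge_coords (weight_j0 n s u) k)" for k
    unfolding edge_coords_def
    by (cases "k = 0"; cases "k = 1") (simp_all add: continuous_map_weight_j0 continuous_map_diff)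
  show "edge_coords (weight_j0 n s u) \<in> std_simplex 1" if "u \<in> topspace (simplex_top n)" for u
    using that by (intro edge_coords_std_simplex weight_j0_bounds) simp_all
qed

definition deform_rep :: "'a sset \<Rightarrow> real \<Rightarrow> nat \<Rightarrow> 'a + 'a \<times> (nat \<Rightarrow> nat) \<Rightarrow> (nat \<Rightarrow> real)
    \<Rightarrow> (nat \<times> ('a + 'a \<times> (nat \<Rightarrow> nat)) set \<times> (nat \<Rightarrow> real)) set" where
  "deform_rep X \<tau> n z u = (case z of
      Inl x \<Rightarrow> real_class (tildeX X) (n, tilde_class X n (Inl x), u)
    | Inr (\<sigma>, s) \<Rightarrow> real_class (tildeX X)
        (Suc (Suc n), tilde_class X (Suc (Suc n)) (Inr (\<sigma>, cone_seq n s)), cone_coords \<tau> n s u))"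

definition retract_rep :: "'a sset \<Rightarrow> nat \<Rightarrow> 'a + 'a \<times> (nat \<Rightarrow> nat) \<Rightarrow> (nat \<Rightarrow> real)
    \<Rightarrow> (nat \<times> 'a \<times> (nat \<Rightarrow> real)) set" where
  "retract_rep X n z u = (case z of
      Inl x \<Rightarrow> real_class X (n, x, u)
    | Inr (\<sigma>, s) \<Rightarrow> real_class X (1, \<sigma>, edge_coords (weight_j0 n s u)))"

lemma deform_rep_Inl: "deform_rep X \<tau> n (Inl x) u = real_class (tildeX X) (n, tilde_class X n (Inl x), u)"
  by (simp add: deform_rep_def)

lemma deform_rep_Inr: "deform_rep X \<tau> n (Inr (\<sigma>, s)) u =
    real_class (tildeX X) (Suc (Suc n), tilde_class X (Suc (Suc n)) (Inr (\<sigma>, cone_seq n s)), cone_coords \<tau> n s u)"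
  by (simp add: deform_rep_def)

lemma retract_rep_Inl: "retract_rep X n (Inl x) u = real_class X (n, x, u)"
  by (simp add: retract_rep_def)

lemma retract_rep_Inr: "retract_rep X n (Inr (\<sigma>, s)) u = real_class X (1, \<sigma>, edge_coords (weight_j0 n s u))"
  by (simp add: retract_rep_def)

context
  fixes X :: "'a sset"
  assumes X: "is_sset X"
begin

lemma real_class_tilde_class_Inl_act:
  assumes "dmor m n \<theta>" "x \<in> simp X n" "t \<in> std_simplex m"
  shows "real_class (tildeX X) (m, tilde_class X m (Inl (act X m n \<theta> x)), t) =
      real_class (tildeX X) (n, tilde_class X n (Inl x), simplex_push m \<theta> t)"
  unfolding act_tilde_class_Inl[OF X assms(1,2), symmetric]
  using assms sset_act_closed[OF X] act_tilde_class_Inl[OF X assms(1,2)]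
  by (intro real_class_act) (simp_all add: tilde_class_in_simp)

lemma real_class_tilde_class_Inr_act:
  assumes "dmor m n \<theta>" "\<sigma> \<in> simp X 1" "s \<in> simp J_sset n" "t \<in> std_simplex m"
  shows "real_class (tildeX X) (m, tilde_class X m (Inr (\<sigma>, pull m \<theta> s)), t) =
      real_class (tildeX X) (n, tilde_class X n (Inr (\<sigma>, s)), simplex_push m \<theta> t)"
proof -
  have "tilde_class X m (Inr (\<sigma>, pull m \<theta> s)) \<in> simp (tildeX X) m"
    by (rule tilde_class_in_simp[OF Inr_in_tilde_reps[OF assms(2) pull_J_sset[OF assms(1,3)]]])
  then show ?thesis
    unfolding act_tilde_class_Inr[OF X assms(1-3), symmetric]
    by (rule real_class_act[OF assms(1) tilde_class_in_simp[OF Inr_in_tilde_reps[OF assms(2,3)]] _ assms(4)])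
qed

lemma deform_rep_glue:
  assumes \<sigma>: "\<sigma> \<in> simp X 1" and s: "s \<in> simp Delta1_sset n" and \<tau>: "\<tau> \<in> {0..1}" and u: "u \<in> std_simplex n"
  shows "deform_rep X \<tau> n (Inl (act X n 1 s \<sigma>)) u = deform_rep X \<tau> n (Inr (\<sigma>, s)) u"
proof -
  have sd: "dmor n 1 s" and cs: "dmor (Suc (Suc n)) 1 (cone_seq n s)"
    using s cone_seq_Delta1_sset[OF s] by (simp_all add: simp_Delta1_sset)
  have "deform_rep X \<tau> n (Inl (act X n 1 s \<sigma>)) u = real_class (tildeX X) (1, tilde_class X 1 (Inl \<sigma>), simplex_push n s u)"
    unfolding deform_rep_Inl by (rule real_class_tilde_class_Inl_act[OF sd \<sigma> u])
  also have "\<dots> = real_class (tildeX X) (1, tilde_class X 1 (Inl \<sigma>), edge_coords (weight_j0 n s u))"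
    by (simp only: simplex_push_Delta1[OF s u])
  also have "\<dots> = real_class (tildeX X) (1, tilde_class X 1 (Inl \<sigma>),
      simplex_push (Suc (Suc n)) (cone_seq n s) (cone_coords \<tau> n s u))"
    by (simp only: simplex_push_cone_seq[OF s u \<tau>])
  also have "\<dots> = deform_rep X \<tau> n (Inr (\<sigma>, s)) u"
    unfolding deform_rep_Inr tilde_class_glue[OF X \<sigma> cone_seq_Delta1_sset[OF s]]
    by (rule real_class_tilde_class_Inl_act[OF cs \<sigma> cone_coords_std_simplex[OF \<tau> u], symmetric])
  finally show ?thesis .
qed

lemma retract_rep_glue:
  assumes \<sigma>: "\<sigma> \<in> simp X 1" and s: "s \<in> simp Delta1_sset n" and u: "u \<in> std_simplex n"
  shows "retract_rep X n (Inl (act X n 1 s \<sigma>)) u = retract_rep X n (Inr (\<sigma>, s)) u"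
proof -
  have sd: "dmor n 1 s" using s by (simp add: simp_Delta1_sset)
  show ?thesis
    unfolding retract_rep_Inl retract_rep_Inr simplex_push_Delta1[OF s u, symmetric]
    using sd \<sigma> sset_act_closed[OF X sd \<sigma>] u by (rule real_class_act)
qed

lemma deform_rep_tilde_rel:
  assumes "(z, z') \<in> tilde_rel X n" and "\<tau> \<in> {0..1}" "u \<in> std_simplex n"
  shows "deform_rep X \<tau> n z u = deform_rep X \<tau> n z' u"
  using deform_rep_glue[OF _ _ assms(2,3)] assms(1) by (rule tilde_rel_invariant)

lemma retract_rep_tilde_rel:
  assumes "(z, z') \<in> tilde_rel X n" and "u \<in> std_simplex n"
  shows "retract_rep X n z u = retract_rep X n z' u"
  using retract_rep_glue[OF _ _ assms(2)] assms(1) by (rule tilde_rel_invariant)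

lemma deform_rep_act:
  assumes \<theta>: "dmor m n \<theta>" and z: "z \<in> tilde_reps X n" and t: "t \<in> std_simplex m" and \<tau>: "\<tau> \<in> {0..1}"
  shows "deform_rep X \<tau> m (tilde_act X m n \<theta> z) t = deform_rep X \<tau> n z (simplex_push m \<theta> t)"
  using z
proof (cases rule: tilde_reps_cases)
  case (Inl x)
  then show ?thesis
    using real_class_tilde_class_Inl_act[OF \<theta> _ t] by (simp add: sum_act_Inl deform_rep_Inl)
next
  case (Inr \<sigma> s)
  have "deform_rep X \<tau> m (tilde_act X m n \<theta> z) t = real_class (tildeX X) (Suc (Suc m),
      tilde_class X (Suc (Suc m)) (Inr (\<sigma>, pull (Suc (Suc m)) (cone_mor m n \<theta>) (cone_seq n s))),
      cone_coords \<tau> m (pull m \<theta> s) t)"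
    by (simp add: Inr(1) sum_act_copr_J_Inr deform_rep_Inr pull_cone_mor[OF \<theta>])
  also have "\<dots> = real_class (tildeX X) (Suc (Suc n), tilde_class X (Suc (Suc n)) (Inr (\<sigma>, cone_seq n s)),
      simplex_push (Suc (Suc m)) (cone_mor m n \<theta>) (cone_coords \<tau> m (pull m \<theta> s) t))"
    by (rule real_class_tilde_class_Inr_act[OF dmor_cone_mor[OF \<theta>] Inr(2) cone_seq_J_sset[OF Inr(3)]
          cone_coords_std_simplex[OF \<tau> t]])
  also have "\<dots> = deform_rep X \<tau> n z (simplex_push m \<theta> t)"
    by (simp add: Inr(1) deform_rep_Inr simplex_push_cone_mor[OF \<theta>])
  finally show ?thesis .
qed

lemma retract_rep_act:
  assumes \<theta>: "dmor m n \<theta>" and z: "z \<in> tilde_reps X n" and t: "t \<in> std_simplex m"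
  shows "retract_rep X m (tilde_act X m n \<theta> z) t = retract_rep X n z (simplex_push m \<theta> t)"
  using z
proof (cases rule: tilde_reps_cases)
  case (Inl x)
  then show ?thesis
    using real_class_act[OF \<theta> _ sset_act_closed[OF X \<theta>] t] by (simp add: sum_act_Inl retract_rep_Inl)
next
  case (Inr \<sigma> s)
  then show ?thesis by (simp add: sum_act_copr_J_Inr retract_rep_Inr weight_j0_pull[OF \<theta>])
qed

lemma continuous_map_deform_rep:
  assumes "z \<in> tilde_reps X n"
  shows "continuous_map (prod_topology unit_interval (simplex_top n)) (realization (tildeX X))
      (\<lambda>p. deform_rep X (fst p) n z (snd p))"
  using assms
proof (cases rule: tilde_reps_cases)
  case (Inl x)
  then show ?thesis
    unfolding Inl(1) deform_rep_Inl
    by (intro continuous_map_real_class[OF _ continuous_map_snd] tilde_class_in_simp) simp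
next
  case (Inr \<sigma> s)
  then show ?thesis
    unfolding Inr(1) deform_rep_Inr
    by (intro continuous_map_real_class[OF _ continuous_map_cone_coords] tilde_class_in_simp
        Inr_in_tilde_reps[OF Inr(2)] cone_seq_J_sset[OF Inr(3)])
qed

lemma continuous_map_retract_rep:
  assumes "z \<in> tilde_reps X n"
  shows "continuous_map (simplex_top n) (realization X) (retract_rep X n z)"
  using assms
proof (cases rule: tilde_reps_cases)
  case (Inl x)
  have "retract_rep X n z = (\<lambda>u. real_class X (n, x, u))"
    by (simp add: fun_eq_iff Inl(1) retract_rep_Inl)
  then show ?thesis
    using continuous_map_real_class[OF Inl(2) continuous_map_id] by simp
next
  case (Inr \<sigma> s)
  have "retract_rep X n z = (\<lambda>u. real_class X (1, \<sigma>, edge_coords (weight_j0 n s u)))"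
    by (simp add: fun_eq_iff Inr(1) retract_rep_Inr)
  then show ?thesis
    using continuous_map_real_class[OF Inr(2) continuous_map_edge_coords_weight_j0] by simp
qed

end

definition deform_pt :: "'a sset \<Rightarrow> real \<Rightarrow> nat \<times> ('a + 'a \<times> (nat \<Rightarrow> nat)) set \<times> (nat \<Rightarrow> real)
    \<Rightarrow> (nat \<times> ('a + 'a \<times> (nat \<Rightarrow> nat)) set \<times> (nat \<Rightarrow> real)) set" where
  "deform_pt X \<tau> = (\<lambda>(n, c, u). deform_rep X \<tau> n (SOME z. z \<in> c) u)"

definition retract_pt :: "'a sset \<Rightarrow> nat \<times> ('a + 'a \<times> (nat \<Rightarrow> nat)) set \<times> (nat \<Rightarrow> real)
    \<Rightarrow> (nat \<times> 'a \<times> (nat \<Rightarrow> real)) set" where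
  "retract_pt X = (\<lambda>(n, c, u). retract_rep X n (SOME z. z \<in> c) u)"

definition tilde_deformation :: "'a sset \<Rightarrow> real \<times> (nat \<times> ('a + 'a \<times> (nat \<Rightarrow> nat)) set \<times> (nat \<Rightarrow> real)) set
    \<Rightarrow> (nat \<times> ('a + 'a \<times> (nat \<Rightarrow> nat)) set \<times> (nat \<Rightarrow> real)) set" where
  "tilde_deformation X = (\<lambda>(\<tau>, c). deform_pt X \<tau> (SOME p. p \<in> c))"

definition tilde_retraction :: "'a sset \<Rightarrow> (nat \<times> ('a + 'a \<times> (nat \<Rightarrow> nat)) set \<times> (nat \<Rightarrow> real)) set
    \<Rightarrow> (nat \<times> 'a \<times> (nat \<Rightarrow> real)) set" where
  "tilde_retraction X = (\<lambda>c. retract_pt X (SOME p. p \<in> c))"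

context
  fixes X :: "'a sset"
  assumes X: "is_sset X"
begin

lemma deform_pt_tilde_class:
  "z \<in> tilde_reps X n \<Longrightarrow> \<tau> \<in> {0..1} \<Longrightarrow> u \<in> std_simplex n \<Longrightarrow>
    deform_pt X \<tau> (n, tilde_class X n z, u) = deform_rep X \<tau> n z u"
  unfolding deform_pt_def using deform_rep_tilde_rel[OF X some_tilde_class] by simp

lemma retract_pt_tilde_class:
  "z \<in> tilde_reps X n \<Longrightarrow> u \<in> std_simplex n \<Longrightarrow>
    retract_pt X (n, tilde_class X n z, u) = retract_rep X n z u"
  unfolding retract_pt_def using retract_rep_tilde_rel[OF X some_tilde_class] by simp

lemma deform_pt_act:
  assumes "\<tau> \<in> {0..1}" "dmor m n \<theta>" "c \<in> simp (tildeX X) n" "u \<in> std_simplex m"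
  shows "deform_pt X \<tau> (m, act (tildeX X) m n \<theta> c, u) = deform_pt X \<tau> (n, c, simplex_push m \<theta> u)"
proof -
  obtain z where z: "z \<in> tilde_reps X n" "c = tilde_class X n z" using assms(3) by (rule tilde_classE)
  then show ?thesis
    using assms deform_rep_act[OF X assms(2) z(1) assms(4,1)] tilde_act_tilde_reps[OF X assms(2) z(1)]
      simplex_push_std_simplex[OF assms(2,4)]
    by (simp add: act_tilde_class[OF X assms(2)] deform_pt_tilde_class)
qed

lemma retract_pt_act:
  assumes "dmor m n \<theta>" "c \<in> simp (tildeX X) n" "u \<in> std_simplex m"
  shows "retract_pt X (m, act (tildeX X) m n \<theta> c, u) = retract_pt X (n, c, simplex_push m \<theta> u)"
proof -
  obtain z where z: "z \<in> tilde_reps X n" "c = tilde_class X n z" using assms(2) by (rule tilde_classE)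
  then show ?thesis
    using assms retract_rep_act[OF X assms(1) z(1) assms(3)] tilde_act_tilde_reps[OF X assms(1) z(1)]
      simplex_push_std_simplex[OF assms(1,3)]
    by (simp add: act_tilde_class[OF X assms(1)] retract_pt_tilde_class)
qed

lemma continuous_map_tilde_deformation:
  "continuous_map (prod_topology unit_interval (realization (tildeX X))) (realization (tildeX X)) (tilde_deformation X)"
  unfolding tilde_deformation_def
proof (rule continuous_map_prod_realization[OF _ deform_pt_act])
  fix n c assume "c \<in> simp (tildeX X) n"
  then obtain z where z: "z \<in> tilde_reps X n" "c = tilde_class X n z" by (rule tilde_classE)
  show "continuous_map (prod_topology unit_interval (simplex_top n)) (realization (tildeX X))
      (\<lambda>(\<tau>, u). deform_pt X \<tau> (n, c, u))"
    by (rule continuous_map_eq[OF continuous_map_deform_rep[OF X z(1)]])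
      (auto simp: z(2) deform_pt_tilde_class[OF z(1)])
qed

lemma continuous_map_tilde_retraction:
  "continuous_map (realization (tildeX X)) (realization X) (tilde_retraction X)"
  unfolding tilde_retraction_def
proof (rule continuous_map_realization[OF _ retract_pt_act])
  fix n c assume "c \<in> simp (tildeX X) n"
  then obtain z where z: "z \<in> tilde_reps X n" "c = tilde_class X n z" by (rule tilde_classE)
  show "continuous_map (simplex_top n) (realization X) (\<lambda>u. retract_pt X (n, c, u))"
    by (rule continuous_map_eq[OF continuous_map_retract_rep[OF X z(1)]])
      (simp add: z(2) retract_pt_tilde_class[OF z(1)])
qed

lemma tilde_deformation_real_class:
  assumes "z \<in> tilde_reps X n" "u \<in> std_simplex n" "\<tau> \<in> {0..1}"
  shows "tilde_deformation X (\<tau>, real_class (tildeX X) (n, tilde_class X n z, u)) = deform_rep X \<tau> n z u"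
proof -
  have "(n, tilde_class X n z, u) \<in> pre_points (tildeX X)"
    using tilde_class_in_simp[OF assms(1)] assms(2) by (simp add: pre_points_def)
  then show ?thesis
    unfolding tilde_deformation_def
    using some_real_class_invariant[of "tildeX X" "deform_pt X \<tau>"] deform_pt_act[OF assms(3)]
      deform_pt_tilde_class[OF assms(1,3,2)] by simp
qed

lemma tilde_retraction_real_class:
  assumes "z \<in> tilde_reps X n" "u \<in> std_simplex n"
  shows "tilde_retraction X (real_class (tildeX X) (n, tilde_class X n z, u)) = retract_rep X n z u"
proof -
  have "(n, tilde_class X n z, u) \<in> pre_points (tildeX X)"
    using tilde_class_in_simp[OF assms(1)] assms(2) by (simp add: pre_points_def)
  then show ?thesis
    unfolding tilde_retraction_def
    using some_real_class_invariant[of "tildeX X" "retract_pt X"] retract_pt_act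
      retract_pt_tilde_class[OF assms] by simp
qed

lemma real_map_tilde_incl:
  "x \<in> simp X n \<Longrightarrow> u \<in> std_simplex n \<Longrightarrow>
    real_map X (tildeX X) (tilde_incl X) (real_class X (n, x, u)) = real_class (tildeX X) (n, tilde_class X n (Inl x), u)"
  using real_map_real_class[OF X sset_map_tilde_incl[OF X]] by (simp add: tilde_incl_eq)

lemma tilde_retraction_real_map_tilde_incl:
  assumes "c \<in> topspace (realization X)"
  shows "tilde_retraction X (real_map X (tildeX X) (tilde_incl X) c) = c"
proof -
  obtain n x u where "x \<in> simp X n" "u \<in> std_simplex n" "c = real_class X (n, x, u)"
    using assms by (rule real_classE)
  then show ?thesis by (simp add: real_map_tilde_incl tilde_retraction_real_class retract_rep_Inl)
qed

lemma tilde_deformation_real_map_tilde_incl: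
  assumes "c \<in> topspace (realization X)" "\<tau> \<in> {0..1}"
  shows "tilde_deformation X (\<tau>, real_map X (tildeX X) (tilde_incl X) c) = real_map X (tildeX X) (tilde_incl X) c"
proof -
  obtain n x u where "x \<in> simp X n" "u \<in> std_simplex n" "c = real_class X (n, x, u)"
    using assms(1) by (rule real_classE)
  then show ?thesis using assms(2) by (simp add: real_map_tilde_incl tilde_deformation_real_class deform_rep_Inl)
qed

text \<open>At \<open>\<tau> = 0\<close> the cone coordinates lie on the face of \<open>cone_seq n s\<close> opposite both cone points,
  which is \<open>s\<close>.\<close>

lemma tilde_deformation_0:
  assumes "c \<in> topspace (realization (tildeX X))"
  shows "tilde_deformation X (0, c) = c"
proof -
  obtain n c' u where c': "c' \<in> simp (tildeX X) n" and u: "u \<in> std_simplex n"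
    and c: "c = real_class (tildeX X) (n, c', u)"
    using assms by (rule real_classE)
  obtain z where z: "z \<in> tilde_reps X n" "c' = tilde_class X n z" using c' by (rule tilde_classE)
  have "deform_rep X 0 n z u = real_class (tildeX X) (n, tilde_class X n z, u)"
    using z(1)
  proof (cases rule: tilde_reps_cases)
    case (Inr \<sigma> s)
    have "real_class (tildeX X) (n, tilde_class X n (Inr (\<sigma>, pull n Suc (cone_seq n s))), u) =
        real_class (tildeX X) (Suc (Suc n), tilde_class X (Suc (Suc n)) (Inr (\<sigma>, cone_seq n s)),
          simplex_push n Suc u)"
      by (rule real_class_tilde_class_Inr_act[OF X dmor_Suc Inr(2) cone_seq_J_sset[OF Inr(3)] u])
    then show ?thesis
      unfolding simplex_push_Suc[of n u s] pull_Suc_cone_seq[OF Inr(3)] by (simp add: Inr(1) deform_rep_Inr)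
  qed (simp add: deform_rep_Inl)
  then show ?thesis using tilde_deformation_real_class[OF z(1) u] by (simp add: c z(2))
qed

text \<open>At \<open>\<tau> = 1\<close> the cone coordinates lie on the edge joining the two cone points, which is glued to
  \<open>\<sigma>\<close>.\<close>

lemma tilde_deformation_1:
  assumes "c \<in> topspace (realization (tildeX X))"
  shows "tilde_deformation X (1, c) = real_map X (tildeX X) (tilde_incl X) (tilde_retraction X c)"
proof -
  obtain n c' u where c': "c' \<in> simp (tildeX X) n" and u: "u \<in> std_simplex n"
    and c: "c = real_class (tildeX X) (n, c', u)"
    using assms by (rule real_classE)
  obtain z where z: "z \<in> tilde_reps X n" "c' = tilde_class X n z" using c' by (rule tilde_classE)
  have "deform_rep X 1 n z u = real_map X (tildeX X) (tilde_incl X) (retract_rep X n z u)"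
    using z(1)
  proof (cases rule: tilde_reps_cases)
    case (Inl x)
    then show ?thesis using u by (simp add: deform_rep_Inl retract_rep_Inl real_map_tilde_incl)
  next
    case (Inr \<sigma> s)
    have e: "edge_coords (weight_j0 n s u) \<in> std_simplex 1"
      using weight_j0_bounds[OF u] by (rule edge_coords_std_simplex)
    have "real_class (tildeX X) (1, tilde_class X 1 (Inr (\<sigma>, pull 1 (cone_ends n) (cone_seq n s))),
          edge_coords (weight_j0 n s u)) =
        real_class (tildeX X) (Suc (Suc n), tilde_class X (Suc (Suc n)) (Inr (\<sigma>, cone_seq n s)),
          simplex_push 1 (cone_ends n) (edge_coords (weight_j0 n s u)))"
      by (rule real_class_tilde_class_Inr_act[OF X dmor_cone_ends Inr(2) cone_seq_J_sset[OF Inr(3)] e])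
    then show ?thesis
      using real_map_tilde_incl[OF Inr(2) e]
      unfolding pull_cone_ends simplex_push_cone_ends tilde_edge_0_1[OF X Inr(2)]
      by (simp add: Inr(1) deform_rep_Inr retract_rep_Inr)
  qed
  then show ?thesis
    using tilde_deformation_real_class[OF z(1) u] tilde_retraction_real_class[OF z(1) u] by (simp add: c z(2))
qed

lemma tilde_deformation_homotopic:
  "homotopic_with (\<lambda>k. \<forall>y\<in>real_map X (tildeX X) (tilde_incl X) ` topspace (realization X). k y = y)
     (realization (tildeX X)) (realization (tildeX X)) id (real_map X (tildeX X) (tilde_incl X) \<circ> tilde_retraction X)"
proof -
  let ?f = "real_map X (tildeX X) (tilde_incl X)"
  have fS: "?f ` topspace (realization X) \<subseteq> topspace (realization (tildeX X))"
    using continuous_map_real_map[OF X sset_map_tilde_incl[OF X]] by (rule continuous_map_image_subset_topspace)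
  show ?thesis
  proof (subst homotopic_with)
    show "(\<forall>y\<in>?f ` topspace (realization X). h y = y) \<longleftrightarrow> (\<forall>y\<in>?f ` topspace (realization X). k y = y)"
      if "\<And>c. c \<in> topspace (realization (tildeX X)) \<Longrightarrow> h c = k c" for h k
      using that fS by blast
    show "\<exists>h. continuous_map (prod_topology unit_interval (realization (tildeX X))) (realization (tildeX X)) h \<and>
        (\<forall>c\<in>topspace (realization (tildeX X)). h (0, c) = id c) \<and>
        (\<forall>c\<in>topspace (realization (tildeX X)). h (1, c) = (?f \<circ> tilde_retraction X) c) \<and>
        (\<forall>\<tau>\<in>{0..1}. \<forall>y\<in>?f ` topspace (realization X). h (\<tau>, y) = y)"
      using tilde_deformation_0 tilde_deformation_1 tilde_deformation_real_map_tilde_incl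
      by (intro exI[of _ "tilde_deformation X"] conjI ballI continuous_map_tilde_deformation) auto
  qed
qed

end

theorem mainTheorem10:
  fixes X :: "'a sset"
  assumes "is_sset X"
  shows "hocat_is_groupoid (tildeX X)
       \<and> acyclic_cofibration X (tildeX X) (tilde_incl X)
       \<and> homotopy_equivalence_map (realization X) (realization (tildeX X))
             (real_map X (tildeX X) (tilde_incl X))"
proof -
  note incl = sset_map_tilde_incl[OF assms]
  note retract = continuous_map_real_map[OF assms incl] continuous_map_tilde_retraction[OF assms]
    tilde_retraction_real_map_tilde_incl[OF assms] tilde_deformation_homotopic[OF assms]
  show ?thesis
    unfolding acyclic_cofibration_def weak_equivalence_def
    using hocat_is_groupoid_tildeX[OF assms] sset_mono_tilde_incl[OF assms] incl
      deformation_retract_weak_homotopy_equivalence[OF retract]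
      deformation_retract_homotopy_equivalence_map[OF retract]
    by blast
qed

end
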